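(* Let $N$ be a finite-dimensional Hilbert space, let $S$ be the operator in $\ell_2(\mathbb{Z},N)$ defined below, and let $J$ be a fundamental symmetry in $\ell_2(\mathbb{Z},N)$ commuting with $S$, of the form $(J(x_k))_k=J_-x_k$ for $k\le0$ and $(J(x_k))_k=J_+x_k$ for $k\ge1$ with fundamental symmetries $J_\pm$ in $N$. Then the set $\Sigma_J(S)$ of $J$-self-adjoint extensions of $S$ is non-empty if and only if $\dim[(I-J_+)N]=\dim[(I-J_-)N]$.
   Context: Let $A$ be the operator in $\ell_2(\mathbb{Z},N)$ with domain consisting of all sequences $f=(f_k)_{k\in\mathbb{Z}}$ of the form $f_k=x_{k-1}-x_k$ with $(x_k)\in\ell_2(\mathbb{Z},N)$, acting by $(Af)_k=i(x_{k-1}+x_k)$; $S$ is the restriction of $A$ to those $f$ with $x_0=0$. A fundamental symmetry is a bounded $J$ with $J=J^*$, $J^2=I$. A densely defined operator $B$ is $J$-self-adjoint if $B^*J=JB$ (i.e. $B$ is self-adjoint with respect to the indefinite inner product $[x,y]_J=(Jx,y)$). $\Sigma_J(S)$ denotes the set of $J$-self-adjoint operators $B$ with $S\subset B$. *)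

theory Defs
  imports "HOL-Analysis.Analysis"
begin

text \<open>The finite-dimensional Hilbert space N is modelled as complex^'n ('n a finite type)
  with the standard inner product. Elements of l2(Z,N) are sequences int => complex^'n.\<close>

type_synonym 'n seq = "int \<Rightarrow> complex ^ 'n"

definition ip_N :: "complex ^ 'n::finite \<Rightarrow> complex ^ 'n \<Rightarrow> complex" where
  "ip_N u v = (\<Sum>i\<in>UNIV. u $ i * cnj (v $ i))"

definition normsq_N :: "complex ^ 'n::finite \<Rightarrow> real" where
  "normsq_N u = (\<Sum>i\<in>UNIV. (cmod (u $ i))\<^sup>2)"

definition l2 :: "'n::finite seq set" where
  "l2 = {x. (\<lambda>k. normsq_N (x k)) summable_on (UNIV :: int set)}"

definition ip_l2 :: "'n::finite seq \<Rightarrow> 'n seq \<Rightarrow> complex" where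
  "ip_l2 f g = (\<Sum>\<^sub>\<infinity>k\<in>(UNIV :: int set). ip_N (f k) (g k))"

definition norm_l2 :: "'n::finite seq \<Rightarrow> real" where
  "norm_l2 f = sqrt (\<Sum>\<^sub>\<infinity>k\<in>(UNIV :: int set). normsq_N (f k))"

definition sadd :: "'n::finite seq \<Rightarrow> 'n seq \<Rightarrow> 'n seq" where
  "sadd f g = (\<lambda>k. f k + g k)"

definition sscale :: "complex \<Rightarrow> 'n::finite seq \<Rightarrow> 'n seq" where
  "sscale c f = (\<lambda>k. c *s f k)"

text \<open>(Possibly unbounded) linear operators in l2(Z,N) are represented by their graphs:
  a linear subspace of l2 x l2 which is the graph of a function.\<close>

definition is_operator :: "('n::finite seq \<times> 'n seq) set \<Rightarrow> bool" where
  "is_operator B \<longleftrightarrow> B \<subseteq> l2 \<times> l2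
     \<and> (\<forall>f g h. (f, g) \<in> B \<longrightarrow> (f, h) \<in> B \<longrightarrow> g = h)
     \<and> (\<lambda>k. 0, \<lambda>k. 0) \<in> B
     \<and> (\<forall>f g f' g'. (f, g) \<in> B \<longrightarrow> (f', g') \<in> B \<longrightarrow> (sadd f f', sadd g g') \<in> B)
     \<and> (\<forall>f g c. (f, g) \<in> B \<longrightarrow> (sscale c f, sscale c g) \<in> B)"

definition dom_op :: "('n::finite seq \<times> 'n seq) set \<Rightarrow> 'n seq set" where
  "dom_op B = fst ` B"

definition dense_in_l2 :: "'n::finite seq set \<Rightarrow> bool" where
  "dense_in_l2 D \<longleftrightarrow> D \<subseteq> l2 \<and>
     (\<forall>f\<in>l2. \<forall>e>0. \<exists>g\<in>D. norm_l2 (\<lambda>k. f k - g k) < e)"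

definition densely_defined :: "('n::finite seq \<times> 'n seq) set \<Rightarrow> bool" where
  "densely_defined B \<longleftrightarrow> is_operator B \<and> dense_in_l2 (dom_op B)"

definition adjoint_op :: "('n::finite seq \<times> 'n seq) set \<Rightarrow> ('n seq \<times> 'n seq) set" where
  "adjoint_op B = {(g, h). g \<in> l2 \<and> h \<in> l2 \<and> (\<forall>(f, u)\<in>B. ip_l2 u g = ip_l2 f h)}"

definition op_comp_right :: "('n::finite seq \<times> 'n seq) set \<Rightarrow> ('n seq \<Rightarrow> 'n seq) \<Rightarrow> ('n seq \<times> 'n seq) set" where
  "op_comp_right B J = {(f, h). f \<in> l2 \<and> (J f, h) \<in> B}"

definition op_comp_left :: "('n seq \<Rightarrow> 'n seq) \<Rightarrow> ('n::finite seq \<times> 'n seq) set \<Rightarrow> ('n seq \<times> 'n seq) set" where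
  "op_comp_left J B = {(f, J g) | f g. (f, g) \<in> B}"

definition J_selfadjoint :: "('n::finite seq \<Rightarrow> 'n seq) \<Rightarrow> ('n seq \<times> 'n seq) set \<Rightarrow> bool" where
  "J_selfadjoint J B \<longleftrightarrow> densely_defined B \<and> op_comp_right (adjoint_op B) J = op_comp_left J B"

definition Sigma_J :: "('n::finite seq \<Rightarrow> 'n seq) \<Rightarrow> ('n seq \<times> 'n seq) set \<Rightarrow> ('n seq \<times> 'n seq) set set" where
  "Sigma_J J S = {B. J_selfadjoint J B \<and> S \<subseteq> B}"

definition cadj :: "complex ^ 'n ^ 'n \<Rightarrow> complex ^ 'n ^ 'n" where
  "cadj M = (\<chi> i j. cnj (M $ j $ i))"

definition fund_sym_N :: "complex ^ 'n ^ 'n \<Rightarrow> bool" where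
  "fund_sym_N M \<longleftrightarrow> cadj M = M \<and> M ** M = mat 1"

definition fund_sym_l2 :: "('n::finite seq \<Rightarrow> 'n seq) \<Rightarrow> bool" where
  "fund_sym_l2 J \<longleftrightarrow> (\<forall>f\<in>l2. J f \<in> l2)
     \<and> (\<forall>f\<in>l2. \<forall>g\<in>l2. J (sadd f g) = sadd (J f) (J g))
     \<and> (\<forall>f\<in>l2. \<forall>c. J (sscale c f) = sscale c (J f))
     \<and> (\<exists>C. \<forall>f\<in>l2. norm_l2 (J f) \<le> C * norm_l2 f)
     \<and> (\<forall>f\<in>l2. \<forall>g\<in>l2. ip_l2 (J f) g = ip_l2 f (J g))
     \<and> (\<forall>f\<in>l2. J (J f) = f)"

definition op_A :: "('n::finite seq \<times> 'n seq) set" where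
  "op_A = {(\<lambda>k. x (k - 1) - x k, \<lambda>k. \<i> *s (x (k - 1) + x k)) | x. x \<in> l2}"

definition op_S :: "('n::finite seq \<times> 'n seq) set" where
  "op_S = {(\<lambda>k. x (k - 1) - x k, \<lambda>k. \<i> *s (x (k - 1) + x k)) | x. x \<in> l2 \<and> x 0 = 0}"

definition commutes_with :: "('n::finite seq \<Rightarrow> 'n seq) \<Rightarrow> ('n seq \<times> 'n seq) set \<Rightarrow> bool" where
  "commutes_with J S \<longleftrightarrow> op_comp_left J S \<subseteq> op_comp_right S J"

definition block_J :: "complex ^ 'n ^ 'n \<Rightarrow> complex ^ 'n ^ 'n \<Rightarrow> 'n::finite seq \<Rightarrow> 'n seq" where
  "block_J Jm Jp x = (\<lambda>k. if k \<le> 0 then Jm *v x k else Jp *v x k)"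

end

theory Submission
  imports Defs
begin

text \<open>An element of the adjoint of S is described by a sequence in l2 that may jump at 0, with a
  boundary value (x(0-), x(0+)) in N \<times> N, and Green's identity expresses the boundary form of the
  adjoint through these boundary values. Hence every J-self-adjoint extension of S is determined by
  a boundary relation L \<subseteq> N \<times> N, and the extension with boundary relation L is J-self-adjoint
  exactly when L is Lagrangian for the Hermitian form [(b, a), (w0, w)] = ip_N a (Jp *v w) -
  ip_N b (Jm *v w0); its domain is dense because differences x(k-1) - x(k) of finitely supported x
  with x(0) = 0 are dense in l2. This form is definite on the products of the -1 eigenspace of Jm
  with the +1 eigenspace of Jp and of the +1 eigenspace of Jm with the -1 eigenspace of Jp. A
  Lagrangian has dimension at least dim N and meets both products trivially, which forces
  dim (I - Jp) N = dim (I - Jm) N; conversely, if these dimensions agree, isometries between the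
  corresponding eigenspaces of Jp and Jm yield a Lagrangian graph.\<close>

section \<open>The inner product on N and the space l2\<close>

lemma ip_N_add_left: "ip_N (u + v) w = ip_N u w + ip_N v w"
  by (simp add: ip_N_def sum.distrib distrib_right)

lemma ip_N_add_right: "ip_N w (u + v) = ip_N w u + ip_N w v"
  by (simp add: ip_N_def sum.distrib distrib_left)

lemma ip_N_diff_left: "ip_N (u - v) w = ip_N u w - ip_N v w"
  by (simp add: ip_N_def sum_subtractf left_diff_distrib)

lemma ip_N_diff_right: "ip_N w (u - v) = ip_N w u - ip_N w v"
  by (simp add: ip_N_def sum_subtractf right_diff_distrib)

lemma ip_N_scale_left: "ip_N (c *s u) w = c * ip_N u w"
  by (simp add: ip_N_def sum_distrib_left mult.assoc)

lemma ip_N_scale_right: "ip_N w (c *s u) = cnj c * ip_N w u"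
  by (simp add: ip_N_def sum_distrib_left algebra_simps)

lemma ip_N_neg_left: "ip_N (- u) w = - ip_N u w"
  by (simp add: ip_N_def sum_negf)

lemma ip_N_neg_right: "ip_N w (- u) = - ip_N w u"
  by (simp add: ip_N_def sum_negf)

lemma ip_N_zero_left [simp]: "ip_N 0 w = 0"
  by (simp add: ip_N_def)

lemma ip_N_zero_right [simp]: "ip_N w 0 = 0"
  by (simp add: ip_N_def)

lemma ip_N_commute: "ip_N v u = cnj (ip_N u v)"
  by (simp add: ip_N_def mult.commute)

lemma normsq_N_nonneg: "normsq_N u \<ge> 0"
  by (simp add: normsq_N_def sum_nonneg)

lemma normsq_N_eq_0_iff: "normsq_N u = 0 \<longleftrightarrow> u = 0"
  by (simp add: normsq_N_def sum_nonneg_eq_0_iff vec_eq_iff)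

lemma ip_N_self: "ip_N u u = of_real (normsq_N u)"
  by (simp add: ip_N_def normsq_N_def flip: complex_norm_square)

lemma ip_N_self_eq_0_iff: "ip_N u u = 0 \<longleftrightarrow> u = 0"
  by (simp add: ip_N_self normsq_N_eq_0_iff)

lemma normsq_N_scale: "normsq_N (c *s u) = (cmod c)\<^sup>2 * normsq_N u"
  by (simp add: normsq_N_def sum_distrib_left norm_mult power_mult_distrib)

lemma norm_ip_N_le: "cmod (ip_N u v) \<le> (normsq_N u + normsq_N v) / 2"
proof -
  have "cmod (ip_N u v) \<le> (\<Sum>i\<in>UNIV. cmod (u $ i * cnj (v $ i)))"
    unfolding ip_N_def by (rule norm_sum)
  also have "\<dots> \<le> (\<Sum>i\<in>UNIV. ((cmod (u $ i))\<^sup>2 + (cmod (v $ i))\<^sup>2) / 2)"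
  proof (rule sum_mono)
    fix i
    have "0 \<le> (cmod (u $ i) - cmod (v $ i))\<^sup>2" by simp
    then show "cmod (u $ i * cnj (v $ i)) \<le> ((cmod (u $ i))\<^sup>2 + (cmod (v $ i))\<^sup>2) / 2"
      by (simp add: norm_mult power2_eq_square algebra_simps)
  qed
  also have "\<dots> = (normsq_N u + normsq_N v) / 2"
    by (simp add: normsq_N_def sum.distrib flip: sum_divide_distrib)
  finally show ?thesis .
qed

lemma normsq_N_add_le: "normsq_N (u + v) \<le> 2 * normsq_N u + 2 * normsq_N v"
proof -
  have "normsq_N (u + v) \<le> (\<Sum>i\<in>UNIV. 2 * (cmod (u $ i))\<^sup>2 + 2 * (cmod (v $ i))\<^sup>2)"
    unfolding normsq_N_def
  proof (rule sum_mono)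
    fix i
    have "(cmod (u $ i + v $ i))\<^sup>2 \<le> (cmod (u $ i) + cmod (v $ i))\<^sup>2"
      by (simp add: power_mono norm_triangle_ineq)
    also have "\<dots> \<le> 2 * (cmod (u $ i))\<^sup>2 + 2 * (cmod (v $ i))\<^sup>2"
      using sum_squares_bound[of "cmod (u $ i)" "cmod (v $ i)"] unfolding power2_sum by linarith
    finally show "(cmod ((u + v) $ i))\<^sup>2 \<le> 2 * (cmod (u $ i))\<^sup>2 + 2 * (cmod (v $ i))\<^sup>2"
      by simp
  qed
  also have "\<dots> = 2 * normsq_N u + 2 * normsq_N v"
    by (simp add: normsq_N_def sum.distrib sum_distrib_left)
  finally show ?thesis .
qed

lemma ip_N_matrix_adjoint: "ip_N (M *v u) w = ip_N u (cadj M *v w)"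
proof -
  have "ip_N (M *v u) w = (\<Sum>i\<in>UNIV. \<Sum>j\<in>UNIV. M $ i $ j * u $ j * cnj (w $ i))"
    unfolding ip_N_def matrix_vector_mult_def by (simp add: sum_distrib_right)
  also have "\<dots> = (\<Sum>j\<in>UNIV. \<Sum>i\<in>UNIV. M $ i $ j * u $ j * cnj (w $ i))"
    by (rule sum.swap)
  also have "\<dots> = ip_N u (cadj M *v w)"
    unfolding ip_N_def matrix_vector_mult_def cadj_def
    by (simp add: sum_distrib_left mult_ac)
  finally show ?thesis .
qed

lemma ip_N_hermitian: "cadj M = M \<Longrightarrow> ip_N (M *v u) w = ip_N u (M *v w)"
  using ip_N_matrix_adjoint by metis

lemma involution_mult_vec: "M ** M = mat 1 \<Longrightarrow> M *v (M *v v) = v"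
  by (simp add: matrix_vector_mul_assoc)

lemma summable_on_diff:
  fixes f g :: "'a \<Rightarrow> 'b::topological_ab_group_add"
  shows "f summable_on A \<Longrightarrow> g summable_on A \<Longrightarrow> (\<lambda>x. f x - g x) summable_on A"
  using summable_on_add[of f A "\<lambda>x. - g x"] summable_on_uminus[of g A] by simp

lemma infsum_diff:
  fixes f g :: "'a \<Rightarrow> 'b::{topological_ab_group_add, t2_space}"
  shows "f summable_on A \<Longrightarrow> g summable_on A \<Longrightarrow>
    infsum (\<lambda>x. f x - g x) A = infsum f A - infsum g A"
  using infsum_add[of f A "\<lambda>x. - g x"] summable_on_uminus[of g A] infsum_uminus[of g A] by simp

lemma infsum_shift_int: "infsum (\<lambda>k::int. a (k - 1)) UNIV = infsum a UNIV"
  using infsum_reindex_bij_betw[of "\<lambda>k::int. k - 1" UNIV UNIV a]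
  by (simp add: bij_betw_def inj_on_def surj_def)

lemma l2_iff: "f \<in> l2 \<longleftrightarrow> (\<lambda>k. normsq_N (f k)) summable_on UNIV"
  by (simp add: l2_def)

lemma l2_add: "f \<in> l2 \<Longrightarrow> g \<in> l2 \<Longrightarrow> (\<lambda>k. f k + g k) \<in> l2"
  unfolding l2_iff
  by (rule summable_on_comparison_test[where f="\<lambda>k. 2 * normsq_N (f k) + 2 * normsq_N (g k)"])
    (auto intro!: summable_on_add summable_on_cmult_right normsq_N_add_le normsq_N_nonneg)

lemma l2_scale: "f \<in> l2 \<Longrightarrow> (\<lambda>k. c *s f k) \<in> l2"
  unfolding l2_iff normsq_N_scale by (rule summable_on_cmult_right)

lemma l2_diff: "f \<in> l2 \<Longrightarrow> g \<in> l2 \<Longrightarrow> (\<lambda>k. f k - g k) \<in> l2"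
  using l2_add[of f "\<lambda>k. (-1) *s g k"] l2_scale[of g "-1"] by simp

lemma l2_zero [simp]: "(\<lambda>k. 0) \<in> l2"
  by (simp add: l2_iff normsq_N_def)

lemma l2_shift: "f \<in> l2 \<Longrightarrow> (\<lambda>k. f (k + c)) \<in> l2"
  unfolding l2_iff
  using summable_on_reindex_bij_betw[of "\<lambda>k::int. k + c" UNIV UNIV "\<lambda>k. normsq_N (f k)"]
  by (simp add: bij_betw_def inj_on_def surj_def)

lemma l2_finite_support: "finite {k. f k \<noteq> 0} \<Longrightarrow> f \<in> l2"
  unfolding l2_iff
  by (rule finite_nonzero_values_imp_summable_on) (auto elim!: rev_finite_subset simp: normsq_N_def)

lemma l2_restrict_finite: "finite F \<Longrightarrow> (\<lambda>k. if k \<in> F then f k else 0) \<in> l2"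
  by (rule l2_finite_support) (auto elim!: rev_finite_subset)

lemma l2_fun_upd: "f \<in> l2 \<Longrightarrow> f(a := v) \<in> l2"
proof -
  assume f: "f \<in> l2"
  have U: "UNIV = insert a (UNIV - {a})" by auto
  have "(\<lambda>k. normsq_N (f k)) summable_on (UNIV - {a})"
    using f unfolding l2_iff by (metis U summable_on_insert_iff)
  then have "(\<lambda>k. normsq_N ((f(a := v)) k)) summable_on (UNIV - {a})"
    by (rule summable_on_cong[THEN iffD1, rotated]) auto
  then show ?thesis unfolding l2_iff by (metis U summable_on_insert_iff)
qed

lemma l2_const_on_infinite:
  assumes "f \<in> l2" "infinite A" "\<And>k. k \<in> A \<Longrightarrow> f k = c"
  shows "c = 0"
proof (rule ccontr)
  assume c: "c \<noteq> 0"
  have "(\<lambda>k. normsq_N (f k)) summable_on A"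
    using assms(1) unfolding l2_iff by (rule summable_on_subset_banach) auto
  then have "(\<lambda>k. normsq_N c) summable_on A"
    by (rule summable_on_cong[THEN iffD1, rotated]) (use assms(3) in auto)
  moreover have "normsq_N c \<noteq> 0" using c normsq_N_eq_0_iff by auto
  ultimately show False using infsum_diverge_constant[OF assms(2)] by blast
qed

lemma ip_N_summable: "f \<in> l2 \<Longrightarrow> g \<in> l2 \<Longrightarrow> (\<lambda>k. ip_N (f k) (g k)) summable_on UNIV"
proof -
  assume f: "f \<in> l2" and g: "g \<in> l2"
  define b where "b k = (1/2) * (normsq_N (f k) + normsq_N (g k))" for k
  have "b summable_on UNIV"
    using f g unfolding l2_iff b_def by (intro summable_on_add summable_on_cmult_right)
  moreover have "b k \<ge> 0" for k by (simp add: b_def normsq_N_nonneg)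
  ultimately have "(\<lambda>k. norm (complex_of_real (b k))) summable_on UNIV" by simp
  moreover have "norm (ip_N (f k) (g k)) \<le> norm (complex_of_real (b k))" for k
    using norm_ip_N_le[of "f k" "g k"] normsq_N_nonneg[of "f k"] normsq_N_nonneg[of "g k"]
    unfolding norm_of_real b_def by simp
  ultimately have "(\<lambda>k. norm (ip_N (f k) (g k))) summable_on UNIV"
    by (rule Infinite_Sum.abs_summable_on_comparison_test)
  then show ?thesis unfolding summable_on_iff_abs_summable_on_complex .
qed

lemma ip_l2_finite_support:
  assumes "finite F" "\<And>k. k \<notin> F \<Longrightarrow> x k = 0"
  shows "ip_l2 x g = (\<Sum>k\<in>F. ip_N (x k) (g k))"
proof -
  have "ip_l2 x g = infsum (\<lambda>k. ip_N (x k) (g k)) F"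
    unfolding ip_l2_def by (rule infsum_cong_neutral) (use assms in auto)
  then show ?thesis using assms by simp
qed

section \<open>Jump sequences and Green's identity\<close>

text \<open>jump_diff and jump_sum are the formulas of A for a sequence that jumps at 0, taking the value
  y 0 as seen from k = 0 and the value z as seen from k = 1; (y 0, z) is the boundary value.\<close>

definition shift_jump :: "'n::finite seq \<Rightarrow> complex ^ 'n \<Rightarrow> 'n seq" where
  "shift_jump y z = (\<lambda>k. if k = 1 then z else y (k - 1))"

definition jump_diff :: "'n::finite seq \<Rightarrow> complex ^ 'n \<Rightarrow> 'n seq" where
  "jump_diff y z = (\<lambda>k. shift_jump y z k - y k)"

definition jump_sum :: "'n::finite seq \<Rightarrow> complex ^ 'n \<Rightarrow> 'n seq" where
  "jump_sum y z = (\<lambda>k. \<i> *s (shift_jump y z k + y k))"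

lemma l2_shift_jump: "y \<in> l2 \<Longrightarrow> shift_jump y z \<in> l2"
proof -
  assume "y \<in> l2"
  then have "(\<lambda>k. y (k + (-1)))(1 := z) \<in> l2" by (intro l2_fun_upd l2_shift)
  moreover have "(\<lambda>k. y (k + (-1)))(1 := z) = shift_jump y z" by (auto simp: shift_jump_def)
  ultimately show ?thesis by simp
qed

lemma l2_jump_diff: "y \<in> l2 \<Longrightarrow> jump_diff y z \<in> l2"
  unfolding jump_diff_def by (intro l2_diff l2_shift_jump)

lemma l2_jump_sum: "y \<in> l2 \<Longrightarrow> jump_sum y z \<in> l2"
  unfolding jump_sum_def by (intro l2_scale l2_add l2_shift_jump)

lemma shift_jump_no_jump: "x 0 = 0 \<Longrightarrow> shift_jump x 0 = (\<lambda>k. x (k - 1))"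
  by (auto simp: shift_jump_def)

lemma jump_diff_add: "jump_diff (\<lambda>k. y k + y' k) (z + z') = (\<lambda>k. jump_diff y z k + jump_diff y' z' k)"
  by (auto simp: jump_diff_def shift_jump_def)

lemma jump_sum_add: "jump_sum (\<lambda>k. y k + y' k) (z + z') = (\<lambda>k. jump_sum y z k + jump_sum y' z' k)"
  by (auto simp: jump_sum_def shift_jump_def vector_add_ldistrib algebra_simps)

lemma jump_diff_scale: "jump_diff (\<lambda>k. c *s y k) (c *s z) = (\<lambda>k. c *s jump_diff y z k)"
  by (auto simp: jump_diff_def shift_jump_def vector_ssub_ldistrib)

lemma jump_sum_scale: "jump_sum (\<lambda>k. c *s y k) (c *s z) = (\<lambda>k. c *s jump_sum y z k)"
  by (auto simp: jump_sum_def shift_jump_def vector_add_ldistrib vec_eq_iff)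

lemma jump_diff_diff: "jump_diff (\<lambda>k. y k - y' k) (z - z') = (\<lambda>k. jump_diff y z k - jump_diff y' z' k)"
  by (auto simp: jump_diff_def shift_jump_def)

lemma jump_zero: "jump_diff (\<lambda>k. 0) 0 = (\<lambda>k. 0)" "jump_sum (\<lambda>k. 0) 0 = (\<lambda>k. 0)"
  by (auto simp: jump_diff_def jump_sum_def shift_jump_def)

lemma jump_inj:
  assumes "jump_diff y z = jump_diff y' z'" "jump_sum y z = jump_sum y' z'"
  shows "y = y' \<and> z = z'"
proof -
  have y: "y k = (1/2) *s ((-\<i>) *s jump_sum y z k - jump_diff y z k)" for y z k
    by (simp add: jump_diff_def jump_sum_def vec_eq_iff field_simps)
  have z: "z = jump_diff y z 1 + y 1" for y z
    by (simp add: jump_diff_def shift_jump_def)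
  have "y = y'" using assms by (metis y ext)
  moreover then have "z = z'" using assms by (metis z)
  ultimately show ?thesis by simp
qed

text \<open>A sequence in l2 that is constant on both half-lines vanishes.\<close>

lemma jump_diff_eq_0_iff:
  assumes "w \<in> l2"
  shows "jump_diff w c = (\<lambda>k. 0) \<longleftrightarrow> w = (\<lambda>k. 0) \<and> c = 0"
proof
  assume zero: "jump_diff w c = (\<lambda>k. 0)"
  have step: "w (k - 1) = w k" if "k \<noteq> 1" for k
    using that fun_cong[OF zero, of k] by (simp add: jump_diff_def shift_jump_def)
  have left: "w (- int n) = w 0" for n
  proof (induction n)
    case (Suc n)
    have "w (- int (Suc n)) = w (- int n - 1)" by (rule arg_cong[where f=w]) simp
    also have "\<dots> = w (- int n)" by (rule step) simp
    finally show ?case using Suc by simp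
  qed simp
  have right: "w (1 + int n) = w 1" for n
  proof (induction n)
    case (Suc n)
    then show ?case using step[of "2 + int n"] by (simp add: algebra_simps)
  qed simp
  have w0: "w 0 = 0"
  proof (rule l2_const_on_infinite[OF assms infinite_Iic[of 0]])
    fix k :: int assume "k \<in> {..0}"
    then show "w k = w 0" using left[of "nat (- k)"] by simp
  qed
  have w1: "w 1 = 0"
  proof (rule l2_const_on_infinite[OF assms infinite_Ici[of 1]])
    fix k :: int assume "k \<in> {1..}"
    then show "w k = w 1" using right[of "nat (k - 1)"] by simp
  qed
  have "w k = 0" for k
    using left[of "nat (- k)"] right[of "nat (k - 1)"] w0 w1 by (cases "k \<le> 0") simp_all
  moreover have "c = 0"
    using fun_cong[OF zero, of 1] w1 by (simp add: jump_diff_def shift_jump_def)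
  ultimately show "w = (\<lambda>k. 0) \<and> c = 0" by auto
qed (simp add: jump_zero)

lemma infsum_ip_shift_jump:
  assumes y: "y \<in> l2" and y': "y' \<in> l2"
  shows "infsum (\<lambda>k. ip_N (shift_jump y' z' k) (shift_jump y z k)) UNIV
       = infsum (\<lambda>k. ip_N (y' k) (y k)) UNIV + (ip_N z' z - ip_N (y' 0) (y 0))"
proof -
  define c where "c = ip_N z' z - ip_N (y' 0) (y 0)"
  have shifted: "(\<lambda>k. ip_N (y' (k + -1)) (y (k + -1))) summable_on UNIV"
    using y y' by (intro ip_N_summable l2_shift)
  have single: "(\<lambda>k::int. if k = 1 then c else 0) summable_on UNIV"
    by (rule finite_nonzero_values_imp_summable_on) auto
  have "infsum (\<lambda>k. ip_N (shift_jump y' z' k) (shift_jump y z k)) UNIV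
      = infsum (\<lambda>k. ip_N (y' (k - 1)) (y (k - 1)) + (if k = 1 then c else 0)) UNIV"
    by (rule infsum_cong) (auto simp: shift_jump_def c_def)
  also have "\<dots> = infsum (\<lambda>k. ip_N (y' (k - 1)) (y (k - 1))) UNIV + c"
    using shifted single infsum_cong_neutral[of UNIV "{1}" "\<lambda>k::int. if k = 1 then c else 0" "\<lambda>_. c"]
    by (subst infsum_add) simp_all
  also have "infsum (\<lambda>k. ip_N (y' (k - 1)) (y (k - 1))) UNIV = infsum (\<lambda>k. ip_N (y' k) (y k)) UNIV"
    by (rule infsum_shift_int[where a="\<lambda>k. ip_N (y' k) (y k)"])
  finally show ?thesis unfolding c_def .
qed

lemma green_identity:
  assumes y: "y \<in> l2" and y': "y' \<in> l2"
  shows "ip_l2 (jump_sum y' z') (jump_diff y z) - ip_l2 (jump_diff y' z') (jump_sum y z)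
       = 2 * \<i> * (ip_N z' z - ip_N (y' 0) (y 0))"
proof -
  let ?s = "shift_jump y z" and ?s' = "shift_jump y' z'"
  have pointwise: "ip_N (jump_sum y' z' k) (jump_diff y z k) - ip_N (jump_diff y' z' k) (jump_sum y z k)
      = 2 * \<i> * (ip_N (?s' k) (?s k) - ip_N (y' k) (y k))" for k
    unfolding jump_diff_def jump_sum_def
    by (simp add: ip_N_add_left ip_N_add_right ip_N_diff_left ip_N_diff_right ip_N_scale_left
        ip_N_scale_right algebra_simps)
  have ss: "(\<lambda>k. ip_N (?s' k) (?s k)) summable_on UNIV"
    using y y' by (intro ip_N_summable l2_shift_jump)
  have sy: "(\<lambda>k. ip_N (y' k) (y k)) summable_on UNIV"
    by (rule ip_N_summable[OF y' y])
  have "ip_l2 (jump_sum y' z') (jump_diff y z) - ip_l2 (jump_diff y' z') (jump_sum y z)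
      = infsum (\<lambda>k. 2 * \<i> * (ip_N (?s' k) (?s k) - ip_N (y' k) (y k))) UNIV"
    unfolding ip_l2_def pointwise[symmetric]
    using y y' by (intro infsum_diff[symmetric] ip_N_summable l2_jump_diff l2_jump_sum)
  also have "\<dots> = 2 * \<i> * (infsum (\<lambda>k. ip_N (?s' k) (?s k)) UNIV - infsum (\<lambda>k. ip_N (y' k) (y k)) UNIV)"
    by (simp add: infsum_cmult_right summable_on_diff[OF ss sy] infsum_diff[OF ss sy])
  finally show ?thesis by (simp add: infsum_ip_shift_jump[OF y y'] algebra_simps)
qed

section \<open>Extensions given by boundary relations\<close>

definition bc_op :: "((complex ^ 'n) \<times> (complex ^ 'n)) set \<Rightarrow> ('n::finite seq \<times> 'n seq) set" where
  "bc_op L = {(jump_diff y z, jump_sum y z) | y z. y \<in> l2 \<and> (y 0, z) \<in> L}"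

definition delta :: "int \<Rightarrow> complex ^ 'n \<Rightarrow> 'n::finite seq" where
  "delta j u = (\<lambda>k. if k = j then u else 0)"

lemma l2_delta: "delta j u \<in> l2"
  by (rule l2_finite_support) (auto simp: delta_def intro: rev_finite_subset[of "{j}"])

lemma bc_opI: "y \<in> l2 \<Longrightarrow> (y 0, z) \<in> L \<Longrightarrow> (jump_diff y z, jump_sum y z) \<in> bc_op L"
  unfolding bc_op_def by blast

lemma jump_in_bc_op_iff:
  "y \<in> l2 \<Longrightarrow> (jump_diff y z, jump_sum y z) \<in> bc_op L \<longleftrightarrow> (y 0, z) \<in> L"
  unfolding bc_op_def using jump_inj by blast

lemma op_S_eq_bc_op: "op_S = bc_op {(0, 0)}"
proof -
  have "op_S = {(jump_diff x 0, jump_sum x 0) | x. x \<in> l2 \<and> x 0 = 0}"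
    unfolding op_S_def jump_diff_def jump_sum_def
    by (rule set_eqI, rule iffI; clarsimp; rule_tac x=x in exI; simp add: shift_jump_no_jump)
  then show ?thesis unfolding bc_op_def by auto
qed

lemma jump_delta:
  assumes "j \<noteq> 0"
  shows "jump_diff (delta j u) 0 = (\<lambda>k. if k = j + 1 then u else if k = j then - u else 0)"
    and "jump_sum (delta j u) 0 = (\<lambda>k. if k = j + 1 \<or> k = j then \<i> *s u else 0)"
  using assms by (auto simp: jump_diff_def jump_sum_def shift_jump_def delta_def)

text \<open>Testing against the elements of S supported on {j, j + 1} shows that an element of the
  adjoint satisfies the recurrence of A away from the boundary.\<close>

lemma adjoint_bc_op_recurrence:
  assumes adj: "\<forall>(f, u)\<in>bc_op L. ip_l2 u g = ip_l2 f h" and L0: "(0, 0) \<in> L" and j: "j \<noteq> 0"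
  shows "(-\<i>) *s (g (j + 1) + g j) = h (j + 1) - h j"
proof -
  define w where "w = (-\<i>) *s (g (j + 1) + g j) - (h (j + 1) - h j)"
  have "(jump_diff (delta j w) 0, jump_sum (delta j w) 0) \<in> bc_op L"
    by (rule bc_opI[OF l2_delta]) (use L0 j in \<open>simp add: delta_def\<close>)
  then have "ip_l2 (jump_sum (delta j w) 0) g = ip_l2 (jump_diff (delta j w) 0) h"
    using adj by blast
  moreover have "ip_l2 (jump_sum (delta j w) 0) g = ip_N (\<i> *s w) (g j) + ip_N (\<i> *s w) (g (j + 1))"
    by (subst ip_l2_finite_support[of "{j, j + 1}"]) (auto simp: jump_delta[OF j])
  moreover have "ip_l2 (jump_diff (delta j w) 0) h = ip_N (- w) (h j) + ip_N w (h (j + 1))"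
    by (subst ip_l2_finite_support[of "{j, j + 1}"]) (auto simp: jump_delta[OF j])
  moreover have "ip_N w w = \<i> * ip_N w (g (j + 1)) + \<i> * ip_N w (g j) - ip_N w (h (j + 1)) + ip_N w (h j)"
    by (subst (2) w_def) (simp add: ip_N_add_right ip_N_diff_right ip_N_scale_right ip_N_neg_right)
  ultimately have "ip_N w w = 0" by (simp add: ip_N_scale_left ip_N_neg_left algebra_simps)
  then show ?thesis by (simp add: ip_N_self_eq_0_iff w_def)
qed

lemma adjoint_bc_op_jump_form:
  assumes L0: "(0, 0) \<in> L" and "(g, h) \<in> adjoint_op (bc_op L)"
  shows "\<exists>y z. y \<in> l2 \<and> g = jump_diff y z \<and> h = jump_sum y z"
proof -
  have g: "g \<in> l2" and h: "h \<in> l2" and adj: "\<forall>(f, u)\<in>bc_op L. ip_l2 u g = ip_l2 f h"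
    using assms(2) unfolding adjoint_op_def by auto
  define y where "y = (\<lambda>k. (1 / (2 * \<i>)) *s (h k - \<i> *s g k))"
  define z where "z = (1 / (2 * \<i>)) *s (h 1 + \<i> *s g 1)"
  have shift: "shift_jump y z k = (1 / (2 * \<i>)) *s (h k + \<i> *s g k)" for k
  proof (cases "k = 1")
    case False
    then have "(-\<i>) *s (g k + g (k - 1)) = h k - h (k - 1)"
      using adjoint_bc_op_recurrence[OF adj L0, of "k - 1"] by simp
    then have "h (k - 1) - \<i> *s g (k - 1) = h k + \<i> *s g k"
      by (simp add: vec_eq_iff algebra_simps)
    then have "y (k - 1) = (1 / (2 * \<i>)) *s (h k + \<i> *s g k)"
      unfolding y_def by (simp only:)
    then show ?thesis using False by (simp add: shift_jump_def)
  qed (simp add: shift_jump_def z_def)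
  have "g = jump_diff y z" "h = jump_sum y z"
    by (rule ext, simp only: jump_diff_def jump_sum_def shift, simp add: y_def vec_eq_iff field_simps)+
  moreover have "y \<in> l2" unfolding y_def by (intro l2_scale l2_diff g h)
  ultimately show ?thesis by blast
qed

lemma jump_in_adjoint_bc_op_iff:
  assumes y: "y \<in> l2"
  shows "(jump_diff y z, jump_sum y z) \<in> adjoint_op (bc_op L) \<longleftrightarrow> (\<forall>(b, a)\<in>L. ip_N a z = ip_N b (y 0))"
proof
  assume adj: "(jump_diff y z, jump_sum y z) \<in> adjoint_op (bc_op L)"
  show "\<forall>(b, a)\<in>L. ip_N a z = ip_N b (y 0)"
  proof clarify
    fix b a assume "(b, a) \<in> L"
    then have "(jump_diff (delta 0 b) a, jump_sum (delta 0 b) a) \<in> bc_op L"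
      by (intro bc_opI l2_delta) (simp add: delta_def)
    then have "ip_l2 (jump_sum (delta 0 b) a) (jump_diff y z) = ip_l2 (jump_diff (delta 0 b) a) (jump_sum y z)"
      using adj unfolding adjoint_op_def by blast
    then have "2 * \<i> * (ip_N a z - ip_N (delta 0 b 0) (y 0)) = 0"
      using green_identity[OF y l2_delta, of 0 b a z] by simp
    then show "ip_N a z = ip_N b (y 0)" by (simp add: delta_def)
  qed
next
  assume orth: "\<forall>(b, a)\<in>L. ip_N a z = ip_N b (y 0)"
  have "ip_l2 u (jump_diff y z) = ip_l2 f (jump_sum y z)" if "(f, u) \<in> bc_op L" for f u
  proof -
    from that obtain y' z' where y': "y' \<in> l2" "(y' 0, z') \<in> L"
      and fu: "f = jump_diff y' z'" "u = jump_sum y' z'"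
      unfolding bc_op_def by blast
    have "ip_N z' z = ip_N (y' 0) (y 0)" using orth y'(2) by blast
    then show ?thesis using green_identity[OF y y'(1), of z' z] fu by simp
  qed
  then show "(jump_diff y z, jump_sum y z) \<in> adjoint_op (bc_op L)"
    unfolding adjoint_op_def using y l2_jump_diff l2_jump_sum by blast
qed

lemma ball_l2_value_at: "(\<forall>y\<in>l2. \<forall>z. Q (y j) z) \<longleftrightarrow> (\<forall>w z. Q w z)"
proof
  assume "\<forall>y\<in>l2. \<forall>z. Q (y j) z"
  then have "Q (delta j w j) z" for w z using l2_delta by blast
  then show "\<forall>w z. Q w z" by (simp add: delta_def)
qed auto

lemma adjoint_op_antimono: "A \<subseteq> B \<Longrightarrow> adjoint_op B \<subseteq> adjoint_op A"
  unfolding adjoint_op_def by blast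

lemma block_J_jump_diff: "block_J Jm Jp (jump_diff y z) = jump_diff (block_J Jm Jp y) (Jp *v z)"
  by (rule ext) (auto simp: block_J_def jump_diff_def shift_jump_def matrix_vector_mult_diff_distrib)

lemma block_J_jump_sum: "block_J Jm Jp (jump_sum y z) = jump_sum (block_J Jm Jp y) (Jp *v z)"
  by (rule ext)
    (auto simp: block_J_def jump_sum_def shift_jump_def matrix_vector_right_distrib vector_scalar_commute)

lemma block_J_involution:
  "Jm ** Jm = mat 1 \<Longrightarrow> Jp ** Jp = mat 1 \<Longrightarrow> block_J Jm Jp (block_J Jm Jp f) = f"
  by (rule ext) (simp add: block_J_def involution_mult_vec)

definition lagrangian :: "complex ^ 'n ^ 'n \<Rightarrow> complex ^ 'n ^ 'n \<Rightarrow> ((complex ^ 'n) \<times> (complex ^ 'n)) set \<Rightarrow> bool" where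
  "lagrangian Jm Jp L \<longleftrightarrow>
     (\<forall>w0 w. (w0, w) \<in> L \<longleftrightarrow> (\<forall>(b, a)\<in>L. ip_N a (Jp *v w) = ip_N b (Jm *v w0)))"

lemma lagrangian_zero: "lagrangian Jm Jp L \<Longrightarrow> (0, 0) \<in> L"
  unfolding lagrangian_def by auto

lemma lagrangian_add: "lagrangian Jm Jp L \<Longrightarrow> (a, b) \<in> L \<Longrightarrow> (c, d) \<in> L \<Longrightarrow> (a + c, b + d) \<in> L"
  unfolding lagrangian_def
  by (simp add: matrix_vector_right_distrib ip_N_add_right split_beta)

lemma lagrangian_scale: "lagrangian Jm Jp L \<Longrightarrow> (a, b) \<in> L \<Longrightarrow> (s *s a, s *s b) \<in> L"
  unfolding lagrangian_def
  by (simp add: vector_scalar_commute ip_N_scale_right split_beta)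

lemma op_comp_right_adjoint_bc_op_jump_form:
  fixes Jm Jp :: "complex ^ 'n::finite ^ 'n"
  assumes inv: "Jm ** Jm = mat 1" "Jp ** Jp = mat 1"
    and J_l2: "\<forall>f\<in>l2. block_J Jm Jp f \<in> l2" and L0: "(0, 0) \<in> L"
    and p: "p \<in> op_comp_right (adjoint_op (bc_op L)) (block_J Jm Jp)"
  shows "\<exists>y z. y \<in> l2 \<and> p = (jump_diff y z, block_J Jm Jp (jump_sum y z))"
proof -
  let ?J = "block_J Jm Jp"
  obtain f h where p: "p = (f, h)" and "(?J f, h) \<in> adjoint_op (bc_op L)"
    using p unfolding op_comp_right_def by auto
  then obtain y z where y: "y \<in> l2" and fh: "?J f = jump_diff y z" "h = jump_sum y z"
    using adjoint_bc_op_jump_form[OF L0] by blast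
  have "f = jump_diff (?J y) (Jp *v z)"
    using fh(1) block_J_involution[OF inv, of f] block_J_jump_diff by metis
  moreover have "h = ?J (jump_sum (?J y) (Jp *v z))"
    using fh(2) block_J_involution[OF inv] block_J_jump_sum by metis
  ultimately show ?thesis using p J_l2 y by blast
qed

lemma jump_in_op_comp_left_bc_op_iff:
  fixes Jm Jp :: "complex ^ 'n::finite ^ 'n"
  assumes inv: "Jm ** Jm = mat 1" "Jp ** Jp = mat 1" and y: "y \<in> l2"
  shows "(jump_diff y z, block_J Jm Jp (jump_sum y z)) \<in> op_comp_left (block_J Jm Jp) (bc_op L)
    \<longleftrightarrow> (y 0, z) \<in> L"
proof -
  have "block_J Jm Jp f = block_J Jm Jp g \<longleftrightarrow> f = g" for f g
    using block_J_involution[OF inv] by metis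
  then have "(jump_diff y z, block_J Jm Jp (jump_sum y z)) \<in> op_comp_left (block_J Jm Jp) (bc_op L)
      \<longleftrightarrow> (jump_diff y z, jump_sum y z) \<in> bc_op L"
    unfolding op_comp_left_def by auto
  then show ?thesis using jump_in_bc_op_iff[OF y] by simp
qed

lemma jump_in_op_comp_right_adjoint_bc_op_iff:
  fixes Jm Jp :: "complex ^ 'n::finite ^ 'n"
  assumes J_l2: "\<forall>f\<in>l2. block_J Jm Jp f \<in> l2" and y: "y \<in> l2"
  shows "(jump_diff y z, block_J Jm Jp (jump_sum y z)) \<in> op_comp_right (adjoint_op (bc_op L)) (block_J Jm Jp)
    \<longleftrightarrow> (\<forall>(b, a)\<in>L. ip_N a (Jp *v z) = ip_N b (Jm *v y 0))"
proof -
  let ?J = "block_J Jm Jp"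
  have "(jump_diff y z, ?J (jump_sum y z)) \<in> op_comp_right (adjoint_op (bc_op L)) ?J
      \<longleftrightarrow> (jump_diff (?J y) (Jp *v z), jump_sum (?J y) (Jp *v z)) \<in> adjoint_op (bc_op L)"
    using l2_jump_diff[OF y] by (simp add: op_comp_right_def block_J_jump_diff block_J_jump_sum)
  also have "\<dots> \<longleftrightarrow> (\<forall>(b, a)\<in>L. ip_N a (Jp *v z) = ip_N b (Jm *v y 0))"
    unfolding jump_in_adjoint_bc_op_iff[OF J_l2[rule_format, OF y]] by (simp add: block_J_def)
  finally show ?thesis .
qed

lemma bc_op_J_selfadjoint_iff:
  fixes Jm Jp :: "complex ^ 'n::finite ^ 'n"
  assumes inv: "Jm ** Jm = mat 1" "Jp ** Jp = mat 1"
    and J_l2: "\<forall>f\<in>l2. block_J Jm Jp f \<in> l2" and L0: "(0, 0) \<in> L"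
  shows "op_comp_right (adjoint_op (bc_op L)) (block_J Jm Jp) = op_comp_left (block_J Jm Jp) (bc_op L)
    \<longleftrightarrow> lagrangian Jm Jp L"
proof -
  let ?J = "block_J Jm Jp"
  define orth where "orth w0 w \<longleftrightarrow> (\<forall>(b, a)\<in>L. ip_N a (Jp *v w) = ip_N b (Jm *v w0))" for w0 w
  note in_left = jump_in_op_comp_left_bc_op_iff[OF inv, where L=L]
  note in_right = jump_in_op_comp_right_adjoint_bc_op_iff[OF J_l2, where L=L, folded orth_def]
  have "op_comp_right (adjoint_op (bc_op L)) ?J = op_comp_left ?J (bc_op L)
      \<longleftrightarrow> (\<forall>y\<in>l2. \<forall>z. (y 0, z) \<in> L \<longleftrightarrow> orth (y 0) z)"
  proof
    assume "op_comp_right (adjoint_op (bc_op L)) ?J = op_comp_left ?J (bc_op L)"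
    then show "\<forall>y\<in>l2. \<forall>z. (y 0, z) \<in> L \<longleftrightarrow> orth (y 0) z"
      using in_left in_right by blast
  next
    assume eq: "\<forall>y\<in>l2. \<forall>z. (y 0, z) \<in> L \<longleftrightarrow> orth (y 0) z"
    have jump_form: "\<exists>y z. y \<in> l2 \<and> p = (jump_diff y z, ?J (jump_sum y z))"
      if "p \<in> op_comp_right (adjoint_op (bc_op L)) ?J \<or> p \<in> op_comp_left ?J (bc_op L)" for p
      using that
    proof
      assume "p \<in> op_comp_left ?J (bc_op L)"
      then show ?thesis unfolding op_comp_left_def bc_op_def by auto
    qed (rule op_comp_right_adjoint_bc_op_jump_form[OF inv J_l2 L0])
    show "op_comp_right (adjoint_op (bc_op L)) ?J = op_comp_left ?J (bc_op L)"
    proof (rule set_eqI)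
      fix p
      show "p \<in> op_comp_right (adjoint_op (bc_op L)) ?J \<longleftrightarrow> p \<in> op_comp_left ?J (bc_op L)"
      proof (cases "p \<in> op_comp_right (adjoint_op (bc_op L)) ?J \<or> p \<in> op_comp_left ?J (bc_op L)")
        case True
        then obtain y z where "y \<in> l2" "p = (jump_diff y z, ?J (jump_sum y z))"
          using jump_form by blast
        then show ?thesis using in_left in_right eq by simp
      qed blast
    qed
  qed
  also have "\<dots> \<longleftrightarrow> lagrangian Jm Jp L"
    unfolding lagrangian_def orth_def[symmetric] by (rule ball_l2_value_at)
  finally show ?thesis .
qed

definition boundary_rel :: "('n::finite seq \<times> 'n seq) set \<Rightarrow> ((complex ^ 'n) \<times> (complex ^ 'n)) set" where
  "boundary_rel B = {(y 0, z) | y z. y \<in> l2 \<and> (jump_diff y z, jump_sum y z) \<in> B}"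

lemma J_selfadjoint_extension_jump_form:
  fixes Jm Jp :: "complex ^ 'n::finite ^ 'n"
  assumes inv: "Jm ** Jm = mat 1" "Jp ** Jp = mat 1"
    and J_l2: "\<forall>f\<in>l2. block_J Jm Jp f \<in> l2"
    and B: "B \<in> Sigma_J (block_J Jm Jp) op_S" and fg: "(f, g) \<in> B"
  shows "\<exists>y z. y \<in> l2 \<and> f = jump_diff y z \<and> g = jump_sum y z"
proof -
  let ?J = "block_J Jm Jp"
  have "(f, ?J g) \<in> op_comp_left ?J B"
    unfolding op_comp_left_def using fg by blast
  then have "(?J f, ?J g) \<in> adjoint_op B"
    using B unfolding Sigma_J_def J_selfadjoint_def op_comp_right_def by blast
  then have "(?J f, ?J g) \<in> adjoint_op (bc_op {(0, 0)})"
    using B adjoint_op_antimono unfolding Sigma_J_def op_S_eq_bc_op by blast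
  then obtain y z where y: "y \<in> l2" and e: "?J f = jump_diff y z" "?J g = jump_sum y z"
    using adjoint_bc_op_jump_form[of "{(0, 0)}"] by blast
  have "f = jump_diff (?J y) (Jp *v z)"
    using e(1) block_J_involution[OF inv, of f] block_J_jump_diff by metis
  moreover have "g = jump_sum (?J y) (Jp *v z)"
    using e(2) block_J_involution[OF inv, of g] block_J_jump_sum by metis
  ultimately show ?thesis using J_l2 y by blast
qed

text \<open>An extension of S is determined by its boundary relation, since any two elements with
  the same boundary value differ by an element of S.\<close>

lemma J_selfadjoint_extension_eq_bc_op:
  fixes Jm Jp :: "complex ^ 'n::finite ^ 'n"
  assumes inv: "Jm ** Jm = mat 1" "Jp ** Jp = mat 1"
    and J_l2: "\<forall>f\<in>l2. block_J Jm Jp f \<in> l2"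
    and B: "B \<in> Sigma_J (block_J Jm Jp) op_S"
  shows "B = bc_op (boundary_rel B)"
proof
  show "B \<subseteq> bc_op (boundary_rel B)"
  proof
    fix p assume "p \<in> B"
    moreover obtain f g where p: "p = (f, g)" by (cases p)
    ultimately obtain y z where "y \<in> l2" "f = jump_diff y z" "g = jump_sum y z"
      using J_selfadjoint_extension_jump_form[OF inv J_l2 B] by blast
    then show "p \<in> bc_op (boundary_rel B)"
      unfolding bc_op_def boundary_rel_def p using \<open>p \<in> B\<close> p by blast
  qed
  have op: "is_operator B" and SB: "op_S \<subseteq> B"
    using B unfolding Sigma_J_def J_selfadjoint_def densely_defined_def by auto
  show "bc_op (boundary_rel B) \<subseteq> B"
  proof
    fix p assume "p \<in> bc_op (boundary_rel B)"
    then obtain y z y' where p: "p = (jump_diff y z, jump_sum y z)" and y: "y \<in> l2" "y' \<in> l2"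
      and same: "y 0 = y' 0" and y'B: "(jump_diff y' z, jump_sum y' z) \<in> B"
      unfolding bc_op_def boundary_rel_def by auto
    have "(jump_diff (\<lambda>k. y k - y' k) 0, jump_sum (\<lambda>k. y k - y' k) 0) \<in> B"
      using SB unfolding op_S_eq_bc_op
      by (rule subsetD) (rule bc_opI, use y same in \<open>auto intro: l2_diff\<close>)
    then have "(sadd (jump_diff y' z) (jump_diff (\<lambda>k. y k - y' k) 0),
        sadd (jump_sum y' z) (jump_sum (\<lambda>k. y k - y' k) 0)) \<in> B"
      using op y'B unfolding is_operator_def by blast
    moreover have "sadd (jump_diff y' z) (jump_diff (\<lambda>k. y k - y' k) 0) = jump_diff y z"
      using jump_diff_add[of y' "\<lambda>k. y k - y' k" z 0] by (simp add: sadd_def)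
    moreover have "sadd (jump_sum y' z) (jump_sum (\<lambda>k. y k - y' k) 0) = jump_sum y z"
      using jump_sum_add[of y' "\<lambda>k. y k - y' k" z 0] by (simp add: sadd_def)
    ultimately show "p \<in> B" using p by simp
  qed
qed

lemma Sigma_J_boundary_rel_lagrangian:
  fixes Jm Jp :: "complex ^ 'n::finite ^ 'n"
  assumes inv: "Jm ** Jm = mat 1" "Jp ** Jp = mat 1"
    and J_l2: "\<forall>f\<in>l2. block_J Jm Jp f \<in> l2"
    and B: "B \<in> Sigma_J (block_J Jm Jp) op_S"
  shows "lagrangian Jm Jp (boundary_rel B)"
proof -
  have "op_S \<subseteq> B" using B unfolding Sigma_J_def by blast
  then have "(jump_diff (\<lambda>k. 0) 0, jump_sum (\<lambda>k. 0) 0) \<in> B"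
    unfolding op_S_eq_bc_op by (rule subsetD) (rule bc_opI; simp)
  then have L0: "(0, 0) \<in> boundary_rel B"
    unfolding boundary_rel_def by force
  have "op_comp_right (adjoint_op B) (block_J Jm Jp) = op_comp_left (block_J Jm Jp) B"
    using B unfolding Sigma_J_def J_selfadjoint_def by blast
  then show ?thesis
    using bc_op_J_selfadjoint_iff[OF inv J_l2 L0] J_selfadjoint_extension_eq_bc_op[OF inv J_l2 B]
    by simp
qed

lemma is_operator_bc_op:
  assumes "lagrangian Jm Jp L"
  shows "is_operator (bc_op L)"
  unfolding is_operator_def
proof (intro conjI allI impI)
  show "bc_op L \<subseteq> l2 \<times> l2"
    unfolding bc_op_def using l2_jump_diff l2_jump_sum by blast
  have "(jump_diff (\<lambda>k. 0) 0, jump_sum (\<lambda>k. 0) 0) \<in> bc_op L"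
    by (rule bc_opI) (simp_all add: lagrangian_zero[OF assms])
  then show "(\<lambda>k. 0, \<lambda>k. 0) \<in> bc_op L" by (simp only: jump_zero)
next
  fix f g h assume "(f, g) \<in> bc_op L" "(f, h) \<in> bc_op L"
  then obtain y z y' z' where y: "y \<in> l2" "f = jump_diff y z" "g = jump_sum y z"
    and y': "y' \<in> l2" "f = jump_diff y' z'" "h = jump_sum y' z'"
    unfolding bc_op_def by blast
  have "jump_diff (\<lambda>k. y k - y' k) (z - z') = (\<lambda>k. 0)"
    using y y' by (simp add: jump_diff_diff)
  then have "(\<lambda>k. y k - y' k) = (\<lambda>k. 0)" "z - z' = 0"
    using jump_diff_eq_0_iff[OF l2_diff[OF y(1) y'(1)]] by simp_all
  then have "y = y'" "z = z'"
    by (simp_all add: fun_eq_iff)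
  then show "g = h" using y y' by simp
next
  fix f g f' g' assume "(f, g) \<in> bc_op L" "(f', g') \<in> bc_op L"
  then obtain y z y' z' where y: "y \<in> l2" "(y 0, z) \<in> L" "f = jump_diff y z" "g = jump_sum y z"
    and y': "y' \<in> l2" "(y' 0, z') \<in> L" "f' = jump_diff y' z'" "g' = jump_sum y' z'"
    unfolding bc_op_def by blast
  have "(jump_diff (\<lambda>k. y k + y' k) (z + z'), jump_sum (\<lambda>k. y k + y' k) (z + z')) \<in> bc_op L"
    by (rule bc_opI) (use y y' lagrangian_add[OF assms] l2_add in auto)
  then show "(sadd f f', sadd g g') \<in> bc_op L"
    using y y' by (simp add: jump_diff_add jump_sum_add sadd_def)
next
  fix f g c assume "(f, g) \<in> bc_op L"
  then obtain y z where y: "y \<in> l2" "(y 0, z) \<in> L" "f = jump_diff y z" "g = jump_sum y z"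
    unfolding bc_op_def by blast
  have "(jump_diff (\<lambda>k. c *s y k) (c *s z), jump_sum (\<lambda>k. c *s y k) (c *s z)) \<in> bc_op L"
    by (rule bc_opI) (use y lagrangian_scale[OF assms] l2_scale in auto)
  then show "(sscale c f, sscale c g) \<in> bc_op L"
    using y by (simp add: jump_diff_scale jump_sum_scale sscale_def)
qed

section \<open>Density of the domain\<close>

definition backward_diff :: "'n::finite seq \<Rightarrow> 'n seq" where
  "backward_diff x = (\<lambda>k. x (k - 1) - x k)"

definition normsq_l2 :: "'n::finite seq \<Rightarrow> real" where
  "normsq_l2 h = infsum (\<lambda>k. normsq_N (h k)) UNIV"

lemma jump_diff_no_jump: "x 0 = 0 \<Longrightarrow> jump_diff x 0 = backward_diff x"
  unfolding jump_diff_def backward_diff_def by (simp add: shift_jump_no_jump)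

lemma l2_backward_diff: "x \<in> l2 \<Longrightarrow> backward_diff x \<in> l2"
  unfolding backward_diff_def using l2_shift[of x "-1"] by (auto intro: l2_diff)

lemma backward_diff_add: "backward_diff (\<lambda>k. x k + x' k) = (\<lambda>k. backward_diff x k + backward_diff x' k)"
  by (auto simp: backward_diff_def)

lemma normsq_l2_add_le:
  assumes a: "a \<in> l2" and b: "b \<in> l2"
  shows "normsq_l2 (\<lambda>k. a k + b k) \<le> 2 * normsq_l2 a + 2 * normsq_l2 b"
proof -
  have sa: "(\<lambda>k. 2 * normsq_N (a k)) summable_on UNIV"
    using a by (simp add: l2_iff summable_on_cmult_right)
  have sb: "(\<lambda>k. 2 * normsq_N (b k)) summable_on UNIV"
    using b by (simp add: l2_iff summable_on_cmult_right)
  have "normsq_l2 (\<lambda>k. a k + b k) \<le> infsum (\<lambda>k. 2 * normsq_N (a k) + 2 * normsq_N (b k)) UNIV"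
    unfolding normsq_l2_def
    using l2_add[OF a b] summable_on_add[OF sa sb] normsq_N_add_le
    by (intro infsum_mono) (simp_all add: l2_iff)
  also have "\<dots> = 2 * normsq_l2 a + 2 * normsq_l2 b"
    unfolding normsq_l2_def using a b
    by (simp add: infsum_add[OF sa sb] infsum_cmult_right l2_iff)
  finally show ?thesis .
qed

lemma normsq_l2_finite_support:
  assumes "finite I" "\<And>k. k \<notin> I \<Longrightarrow> h k = 0"
  shows "normsq_l2 h = (\<Sum>k\<in>I. normsq_N (h k))"
proof -
  have "normsq_l2 h = infsum (\<lambda>k. normsq_N (h k)) I"
    unfolding normsq_l2_def by (rule infsum_cong_neutral) (use assms in \<open>auto simp: normsq_N_def\<close>)
  then show ?thesis using assms by simp
qed

lemma normsq_l2_spread: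
  assumes "card I = M" "M > 0" "\<And>k. k \<notin> I \<Longrightarrow> h k = 0" "\<And>k. k \<in> I \<Longrightarrow> h k = (1 / of_nat M) *s u"
  shows "normsq_l2 h = normsq_N u / real M"
proof -
  have "finite I" using assms(1,2) card_ge_0_finite by blast
  then have "normsq_l2 h = (\<Sum>k\<in>I. normsq_N ((1 / of_nat M) *s u))"
    using normsq_l2_finite_support[of I h] assms(3,4) by simp
  also have "\<dots> = real M * ((1 / real M)\<^sup>2 * normsq_N u)"
    using assms(1) by (simp add: normsq_N_scale norm_divide)
  also have "\<dots> = normsq_N u / real M"
    using assms(2) by (simp add: power2_eq_square field_simps)
  finally show ?thesis .
qed

definition diff_approximable :: "'n::finite seq \<Rightarrow> bool" where
  "diff_approximable f \<longleftrightarrow>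
     (\<forall>e>0. \<exists>x. x \<in> l2 \<and> x 0 = 0 \<and> normsq_l2 (\<lambda>k. f k - backward_diff x k) < e)"

lemma diff_approximable_add:
  assumes "f \<in> l2" "g \<in> l2" "diff_approximable f" "diff_approximable g"
  shows "diff_approximable (\<lambda>k. f k + g k)"
  unfolding diff_approximable_def
proof (intro allI impI)
  fix e :: real assume "e > 0"
  then obtain x x' where x: "x \<in> l2" "x 0 = 0" "normsq_l2 (\<lambda>k. f k - backward_diff x k) < e / 4"
    and x': "x' \<in> l2" "x' 0 = 0" "normsq_l2 (\<lambda>k. g k - backward_diff x' k) < e / 4"
    using assms(3,4) unfolding diff_approximable_def by (meson divide_pos_pos zero_less_numeral)
  have "(\<lambda>k. (f k + g k) - backward_diff (\<lambda>k. x k + x' k) k)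
      = (\<lambda>k. (f k - backward_diff x k) + (g k - backward_diff x' k))"
    by (auto simp: backward_diff_add)
  moreover have "normsq_l2 (\<lambda>k. (f k - backward_diff x k) + (g k - backward_diff x' k))
      \<le> 2 * normsq_l2 (\<lambda>k. f k - backward_diff x k) + 2 * normsq_l2 (\<lambda>k. g k - backward_diff x' k)"
    by (rule normsq_l2_add_le) (use assms x x' in \<open>auto intro: l2_diff l2_backward_diff\<close>)
  ultimately have "normsq_l2 (\<lambda>k. (f k + g k) - backward_diff (\<lambda>k. x k + x' k) k) < e"
    using x x' by simp
  then show "\<exists>x. x \<in> l2 \<and> x 0 = 0 \<and> normsq_l2 (\<lambda>k. (f k + g k) - backward_diff x k) < e"
    using x x' l2_add by (intro exI[of _ "\<lambda>k. x k + x' k"]) auto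
qed

text \<open>The sequence delta j u is the backward difference of a step function, which is not in l2.
  A linear ramp of length M on the side of j away from 0 replaces the step at the price of a
  squared error normsq_N u / M.\<close>

lemma delta_ramp_right:
  fixes u :: "complex ^ 'n::finite"
  assumes "j \<ge> 1" "M > 0"
  defines "x \<equiv> (\<lambda>k. if j \<le> k \<and> k \<le> j + int M then (- (of_int (j + int M - k) / of_nat M)) *s u else 0)"
  shows "x \<in> l2" "x 0 = 0" "normsq_l2 (\<lambda>k. delta j u k - backward_diff x k) = normsq_N u / real M"
proof -
  show "x \<in> l2"
    by (rule l2_finite_support) (auto simp: x_def intro: rev_finite_subset[of "{j..j + int M}"])
  show "x 0 = 0" using assms(1) by (simp add: x_def)
  show "normsq_l2 (\<lambda>k. delta j u k - backward_diff x k) = normsq_N u / real M"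
  proof (rule normsq_l2_spread[of "{j + 1..j + int M}"])
    fix k
    show "k \<notin> {j + 1..j + int M} \<Longrightarrow> delta j u k - backward_diff x k = 0"
      using assms(2) by (cases "k = j + int M + 1") (auto simp: delta_def backward_diff_def x_def vec_eq_iff)
    show "k \<in> {j + 1..j + int M} \<Longrightarrow> delta j u k - backward_diff x k = (1 / of_nat M) *s u"
      using assms(2) by (auto simp: delta_def backward_diff_def x_def vec_eq_iff field_simps)
  qed (use assms(2) in simp_all)
qed

lemma delta_ramp_left:
  fixes u :: "complex ^ 'n::finite"
  assumes "j \<le> 0" "M > 0"
  defines "x \<equiv> (\<lambda>k. if j - 1 - int M \<le> k \<and> k \<le> j - 1 then (of_int (k - (j - 1 - int M)) / of_nat M) *s u else 0)"
  shows "x \<in> l2" "x 0 = 0" "normsq_l2 (\<lambda>k. delta j u k - backward_diff x k) = normsq_N u / real M"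
proof -
  show "x \<in> l2"
    by (rule l2_finite_support) (auto simp: x_def intro: rev_finite_subset[of "{j - 1 - int M..j - 1}"])
  show "x 0 = 0" using assms(1) by (simp add: x_def)
  show "normsq_l2 (\<lambda>k. delta j u k - backward_diff x k) = normsq_N u / real M"
  proof (rule normsq_l2_spread[of "{j - int M..j - 1}"])
    fix k
    show "k \<notin> {j - int M..j - 1} \<Longrightarrow> delta j u k - backward_diff x k = 0"
      using assms(2) by (cases "k = j") (auto simp: delta_def backward_diff_def x_def vec_eq_iff)
    show "k \<in> {j - int M..j - 1} \<Longrightarrow> delta j u k - backward_diff x k = (1 / of_nat M) *s u"
      using assms(2) by (auto simp: delta_def backward_diff_def x_def vec_eq_iff field_simps)
  qed (use assms(2) in simp_all)
qed

lemma diff_approximable_delta: "diff_approximable (delta j u)"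
  unfolding diff_approximable_def
proof (intro allI impI)
  fix e :: real assume e: "e > 0"
  obtain M :: nat where "M > normsq_N u / e" using reals_Archimedean2 by blast
  then have M: "Suc M > 0" "normsq_N u / real (Suc M) < e"
    using e by (simp_all add: field_simps)
  show "\<exists>x. x \<in> l2 \<and> x 0 = 0 \<and> normsq_l2 (\<lambda>k. delta j u k - backward_diff x k) < e"
  proof (cases "j \<ge> 1")
    case True
    then show ?thesis using delta_ramp_right[OF True M(1), of u] M(2) by auto
  next
    case False
    then show ?thesis using delta_ramp_left[OF _ M(1), of j u] M(2) by auto
  qed
qed

lemma diff_approximable_finite_support: "finite F \<Longrightarrow> diff_approximable (\<lambda>k. if k \<in> F then f k else 0)"
proof (induction F rule: finite_induct)
  case empty
  show ?case unfolding diff_approximable_def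
    by (intro allI impI exI[of _ "\<lambda>k. 0"]) (simp add: backward_diff_def normsq_l2_def normsq_N_def)
next
  case (insert j F)
  have "(\<lambda>k. if k \<in> insert j F then f k else 0) = (\<lambda>k. delta j (f j) k + (if k \<in> F then f k else 0))"
    using insert.hyps by (auto simp: delta_def)
  then show ?case
    using diff_approximable_add[OF l2_delta l2_restrict_finite[OF insert.hyps(1)]
        diff_approximable_delta insert.IH] by simp
qed

lemma l2_tail_small:
  assumes f: "f \<in> l2" and e: "e > 0"
  shows "\<exists>F. finite F \<and> normsq_l2 (\<lambda>k. if k \<in> F then 0 else f k) < e"
proof -
  let ?n = "\<lambda>k. normsq_N (f k)"
  have s: "?n summable_on UNIV" using f by (simp add: l2_iff)
  obtain F where F: "finite F" and d: "dist (sum ?n F) (infsum ?n UNIV) \<le> e / 2"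
    using infsum_finite_approximation[OF s, of "e / 2"] e by auto
  have s1: "(\<lambda>k. if k \<in> F then ?n k else 0) summable_on UNIV"
    using F by (intro finite_nonzero_values_imp_summable_on) (auto elim!: rev_finite_subset)
  have s2: "(\<lambda>k. if k \<in> F then 0 else ?n k) summable_on UNIV"
    by (rule summable_on_comparison_test[OF s]) (auto simp: normsq_N_nonneg)
  have "infsum (\<lambda>k. if k \<in> F then ?n k else 0) UNIV = infsum ?n F"
    by (rule infsum_cong_neutral) auto
  moreover have "infsum ?n UNIV = infsum (\<lambda>k. (if k \<in> F then ?n k else 0) + (if k \<in> F then 0 else ?n k)) UNIV"
    by (rule infsum_cong) simp
  ultimately have "infsum ?n UNIV = sum ?n F + infsum (\<lambda>k. if k \<in> F then 0 else ?n k) UNIV"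
    using infsum_add[OF s1 s2] F by simp
  moreover have "(\<lambda>k. normsq_N (if k \<in> F then 0 else f k)) = (\<lambda>k. if k \<in> F then 0 else ?n k)"
    by (auto simp: normsq_N_def)
  ultimately have "normsq_l2 (\<lambda>k. if k \<in> F then 0 else f k) = infsum ?n UNIV - sum ?n F"
    unfolding normsq_l2_def by simp
  also have "\<dots> < e" using d e unfolding dist_real_def by linarith
  finally show ?thesis using F by blast
qed

lemma backward_diffs_dense:
  assumes f: "f \<in> l2" and e: "e > 0"
  shows "\<exists>x. x \<in> l2 \<and> x 0 = 0 \<and> norm_l2 (\<lambda>k. f k - backward_diff x k) < e"
proof -
  have e2: "e\<^sup>2 / 4 > 0" using e by simp
  obtain F where F: "finite F" and tail: "normsq_l2 (\<lambda>k. if k \<in> F then 0 else f k) < e\<^sup>2 / 4"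
    using l2_tail_small[OF f e2] by blast
  obtain x where x: "x \<in> l2" "x 0 = 0"
    and head: "normsq_l2 (\<lambda>k. (if k \<in> F then f k else 0) - backward_diff x k) < e\<^sup>2 / 4"
    using diff_approximable_finite_support[OF F, of f] e2 unfolding diff_approximable_def by blast
  have fF: "(\<lambda>k. if k \<in> F then f k else 0) \<in> l2" by (rule l2_restrict_finite[OF F])
  have tl: "(\<lambda>k. if k \<in> F then 0 else f k) \<in> l2"
    using l2_diff[OF f fF] by (simp add: if_distrib cong: if_cong)
  have "(\<lambda>k. f k - backward_diff x k)
      = (\<lambda>k. (if k \<in> F then 0 else f k) + ((if k \<in> F then f k else 0) - backward_diff x k))"
    by auto
  then have "normsq_l2 (\<lambda>k. f k - backward_diff x k) < e\<^sup>2"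
    using normsq_l2_add_le[OF tl l2_diff[OF fF l2_backward_diff[OF x(1)]]] tail head by simp
  then have "sqrt (normsq_l2 (\<lambda>k. f k - backward_diff x k)) < e"
    using e real_sqrt_less_mono by fastforce
  then show ?thesis using x unfolding norm_l2_def normsq_l2_def by blast
qed

lemma dense_dom_bc_op:
  assumes L0: "(0, 0) \<in> L"
  shows "dense_in_l2 (dom_op (bc_op L))"
  unfolding dense_in_l2_def
proof (intro conjI ballI allI impI)
  show "dom_op (bc_op L) \<subseteq> l2" unfolding dom_op_def bc_op_def using l2_jump_diff by auto
next
  fix f :: "'a seq" and e :: real assume "f \<in> l2" "e > 0"
  then obtain x where x: "x \<in> l2" "x 0 = 0" "norm_l2 (\<lambda>k. f k - backward_diff x k) < e"
    using backward_diffs_dense by blast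
  have "(jump_diff x 0, jump_sum x 0) \<in> bc_op L" by (rule bc_opI) (use x L0 in auto)
  then have "backward_diff x \<in> dom_op (bc_op L)"
    unfolding dom_op_def jump_diff_no_jump[of x, OF x(2), symmetric] by force
  then show "\<exists>g\<in>dom_op (bc_op L). norm_l2 (\<lambda>k. f k - g k) < e" using x(3) by blast
qed

lemma bc_op_in_Sigma_J:
  fixes Jm Jp :: "complex ^ 'n::finite ^ 'n"
  assumes inv: "Jm ** Jm = mat 1" "Jp ** Jp = mat 1"
    and J_l2: "\<forall>f\<in>l2. block_J Jm Jp f \<in> l2" and L: "lagrangian Jm Jp L"
  shows "bc_op L \<in> Sigma_J (block_J Jm Jp) op_S"
proof -
  have L0: "(0, 0) \<in> L" by (rule lagrangian_zero[OF L])
  have "op_S \<subseteq> bc_op L"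
    unfolding op_S_eq_bc_op bc_op_def using L0 by force
  moreover have "densely_defined (bc_op L)"
    unfolding densely_defined_def using is_operator_bc_op[OF L] dense_dom_bc_op[OF L0] by blast
  ultimately show ?thesis
    using bc_op_J_selfadjoint_iff[OF inv J_l2 L0] L unfolding Sigma_J_def J_selfadjoint_def by blast
qed

section \<open>Isometries between subspaces of N\<close>

definition isometry_onto :: "(complex ^ 'n::finite) set \<Rightarrow> (complex ^ 'n) set \<Rightarrow> (complex ^ 'n \<Rightarrow> complex ^ 'n) \<Rightarrow> bool" where
  "isometry_onto P Q T \<longleftrightarrow> T ` P = Q \<and> (\<forall>x\<in>P. \<forall>y\<in>P. ip_N (T x) (T y) = ip_N x y)"

lemma subspace_unit_vector:
  fixes P :: "(complex ^ 'n::finite) set"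
  assumes "vec.subspace P" "vec.dim P > 0"
  shows "\<exists>e\<in>P. ip_N e e = 1"
proof -
  have "\<not> P \<subseteq> {0}"
  proof
    assume "P \<subseteq> {0}"
    then have "vec.dim P = 0" by simp
    with assms(2) show False by simp
  qed
  then obtain e where e: "e \<in> P" "e \<noteq> 0" by auto
  then have n: "normsq_N e > 0" using normsq_N_nonneg[of e] normsq_N_eq_0_iff[of e] by linarith
  define e' where "e' = complex_of_real (1 / sqrt (normsq_N e)) *s e"
  have "e' \<in> P" unfolding e'_def using assms(1) e(1) by (rule vec.subspace_scale)
  moreover have "ip_N e' e' = 1"
  proof -
    let ?n = "normsq_N e"
    have "ip_N e' e' = complex_of_real (1 / sqrt ?n) * complex_of_real (1 / sqrt ?n) * complex_of_real ?n"
      unfolding e'_def ip_N_scale_left ip_N_scale_right by (simp add: ip_N_self)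
    also have "\<dots> = complex_of_real ((1 / sqrt ?n) * (1 / sqrt ?n) * ?n)"
      by (simp only: of_real_mult)
    also have "(1 / sqrt ?n) * (1 / sqrt ?n) * ?n = 1"
      using n by (simp add: field_simps)
    finally show ?thesis by simp
  qed
  ultimately show ?thesis by auto
qed

lemma subspace_orth_in:
  assumes P: "vec.subspace P"
  shows "vec.subspace {x\<in>P. ip_N x e = 0}"
proof (rule vec.subspaceI)
  show "0 \<in> {x\<in>P. ip_N x e = 0}" using vec.subspace_0[OF P] by simp
  show "x + y \<in> {x\<in>P. ip_N x e = 0}" if "x \<in> {x\<in>P. ip_N x e = 0}" "y \<in> {x\<in>P. ip_N x e = 0}" for x y
    using that vec.subspace_add[OF P, of x y] by (simp add: ip_N_add_left)
  show "c *s x \<in> {x\<in>P. ip_N x e = 0}" if "x \<in> {x\<in>P. ip_N x e = 0}" for c x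
    using that vec.subspace_scale[OF P, of x c] by (simp add: ip_N_scale_left)
qed

lemma orth_projection_in:
  assumes P: "vec.subspace P" and e: "e \<in> P" "ip_N e e = 1" and x: "x \<in> P"
  shows "x - ip_N x e *s e \<in> {x\<in>P. ip_N x e = 0}"
  using x e P by (simp add: vec.subspace_diff vec.subspace_scale ip_N_diff_left ip_N_scale_left)

lemma dim_subspace_orth_unit:
  fixes P :: "(complex ^ 'n::finite) set"
  assumes P: "vec.subspace P" and e: "e \<in> P" "ip_N e e = 1"
  shows "vec.dim P = vec.dim {x\<in>P. ip_N x e = 0} + 1"
proof -
  let ?P' = "{x\<in>P. ip_N x e = 0}"
  have span: "vec.span ?P' = ?P'"
    using subspace_orth_in[OF P] by (rule vec.span_eq_iff[THEN iffD2])
  have "e \<notin> vec.span ?P'"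
    unfolding span using e(2) by simp
  moreover have "vec.span (insert e ?P') = P"
  proof
    show "vec.span (insert e ?P') \<subseteq> P" using e(1) P by (intro vec.span_minimal) auto
    show "P \<subseteq> vec.span (insert e ?P')"
    proof
      fix x assume "x \<in> P"
      then have "(x - ip_N x e *s e) + ip_N x e *s e \<in> vec.span (insert e ?P')"
        using orth_projection_in[OF P e] by (intro vec.span_add) (auto intro: vec.span_base vec.span_scale)
      then show "x \<in> vec.span (insert e ?P')" by simp
    qed
  qed
  ultimately show ?thesis
    using vec.dim_span[of "insert e ?P'"] vec.dim_insert[of e ?P'] by simp
qed

lemma ip_N_scale_add_expand:
  "ip_N (a *s e + u) (b *s e + v) = a * cnj b * ip_N e e + a * ip_N e v + cnj b * ip_N u e + ip_N u v"
  by (simp add: ip_N_add_left ip_N_add_right ip_N_scale_left ip_N_scale_right algebra_simps)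

text \<open>Gram-Schmidt step: an isometry between the orthogonal complements of unit vectors e and f
  extends to one sending e to f.\<close>

definition unit_extension :: "complex ^ 'n::finite \<Rightarrow> complex ^ 'n \<Rightarrow> (complex ^ 'n \<Rightarrow> complex ^ 'n) \<Rightarrow> complex ^ 'n \<Rightarrow> complex ^ 'n" where
  "unit_extension e f T x = ip_N x e *s f + T (x - ip_N x e *s e)"

lemma unit_extension_image:
  assumes P: "vec.subspace P" and Q: "vec.subspace Q"
    and e: "e \<in> P" "ip_N e e = 1" and f: "f \<in> Q" "ip_N f f = 1"
    and T: "T ` {x\<in>P. ip_N x e = 0} = {x\<in>Q. ip_N x f = 0}"
  shows "unit_extension e f T ` P = Q"
proof
  show "unit_extension e f T ` P \<subseteq> Q"
  proof clarify
    fix x assume "x \<in> P"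
    then have "T (x - ip_N x e *s e) \<in> Q" using T orth_projection_in[OF P e] by blast
    then show "unit_extension e f T x \<in> Q"
      unfolding unit_extension_def using f Q by (intro vec.subspace_add vec.subspace_scale)
  qed
  show "Q \<subseteq> unit_extension e f T ` P"
  proof
    fix q assume "q \<in> Q"
    then have "q - ip_N q f *s f \<in> T ` {x\<in>P. ip_N x e = 0}"
      unfolding T by (rule orth_projection_in[OF Q f])
    then obtain p where p: "p \<in> {x\<in>P. ip_N x e = 0}" "q - ip_N q f *s f = T p"
      by (rule imageE)
    define x where "x = ip_N q f *s e + p"
    have "x \<in> P" unfolding x_def using p(1) e P by (intro vec.subspace_add vec.subspace_scale) auto
    moreover have "ip_N x e = ip_N q f" unfolding x_def using p(1) e by (simp add: ip_N_add_left ip_N_scale_left)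
    moreover have "unit_extension e f T x = q"
      using \<open>ip_N x e = ip_N q f\<close> p(2)[symmetric] by (simp add: unit_extension_def x_def)
    ultimately show "q \<in> unit_extension e f T ` P" by blast
  qed
qed

lemma unit_extension_isometric:
  assumes P: "vec.subspace P" and e: "e \<in> P" "ip_N e e = 1" and f: "ip_N f f = 1"
    and T: "\<forall>x\<in>{x\<in>P. ip_N x e = 0}. ip_N (T x) f = 0"
    and T_iso: "\<forall>x\<in>{x\<in>P. ip_N x e = 0}. \<forall>y\<in>{x\<in>P. ip_N x e = 0}. ip_N (T x) (T y) = ip_N x y"
    and x: "x \<in> P" and y: "y \<in> P"
  shows "ip_N (unit_extension e f T x) (unit_extension e f T y) = ip_N x y"
proof -
  let ?x' = "x - ip_N x e *s e" and ?y' = "y - ip_N y e *s e"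
  have x': "?x' \<in> {x\<in>P. ip_N x e = 0}" and y': "?y' \<in> {x\<in>P. ip_N x e = 0}"
    using orth_projection_in[OF P e] x y by auto
  have o1: "ip_N (T ?x') f = 0" "ip_N f (T ?y') = 0"
    using T x' y' by (auto simp: ip_N_commute[of f "T ?y'"])
  have o2: "ip_N ?x' e = 0" "ip_N e ?y' = 0"
    using x' y' by (auto simp: ip_N_commute[of e ?y'])
  have "ip_N (unit_extension e f T x) (unit_extension e f T y)
      = ip_N (ip_N x e *s f + T ?x') (ip_N y e *s f + T ?y')"
    by (simp add: unit_extension_def)
  also have "\<dots> = ip_N x e * cnj (ip_N y e) + ip_N ?x' ?y'"
    unfolding ip_N_scale_add_expand using f o1 T_iso x' y' by simp
  also have "\<dots> = ip_N x y"
  proof -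
    have "ip_N x y = ip_N (ip_N x e *s e + ?x') (ip_N y e *s e + ?y')" by simp
    also have "\<dots> = ip_N x e * cnj (ip_N y e) + ip_N ?x' ?y'"
      unfolding ip_N_scale_add_expand using e(2) o2 by simp
    finally show ?thesis by simp
  qed
  finally show ?thesis .
qed

lemma isometry_between_equidim_subspaces:
  fixes P Q :: "(complex ^ 'n::finite) set"
  assumes "vec.subspace P" "vec.subspace Q" "vec.dim P = vec.dim Q"
  shows "\<exists>T. isometry_onto P Q T"
proof -
  have "\<exists>T. isometry_onto P Q T"
    if "vec.subspace P" "vec.subspace Q" "vec.dim P = d" "vec.dim Q = d" for d and P Q :: "(complex ^ 'n) set"
    using that
  proof (induction d arbitrary: P Q)
    case 0
    then have "P = {0}" "Q = {0}" using vec.dim_eq_0 vec.subspace_0 by blast+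
    then show ?case unfolding isometry_onto_def by (intro exI[of _ "\<lambda>x. 0"]) auto
  next
    case (Suc d)
    obtain e where e: "e \<in> P" "ip_N e e = 1"
      using subspace_unit_vector[OF Suc.prems(1)] Suc.prems(3) by auto
    obtain f where f: "f \<in> Q" "ip_N f f = 1"
      using subspace_unit_vector[OF Suc.prems(2)] Suc.prems(4) by auto
    let ?P' = "{x\<in>P. ip_N x e = 0}" and ?Q' = "{x\<in>Q. ip_N x f = 0}"
    have "vec.dim ?P' = d" "vec.dim ?Q' = d"
      using dim_subspace_orth_unit[OF Suc.prems(1) e] dim_subspace_orth_unit[OF Suc.prems(2) f]
        Suc.prems(3,4) by simp_all
    then obtain T where T: "T ` ?P' = ?Q'" and T_iso: "\<forall>x\<in>?P'. \<forall>y\<in>?P'. ip_N (T x) (T y) = ip_N x y"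
      using Suc.IH[OF subspace_orth_in[OF Suc.prems(1)] subspace_orth_in[OF Suc.prems(2)]]
      unfolding isometry_onto_def by blast
    have "\<forall>x\<in>?P'. ip_N (T x) f = 0" using T by blast
    then show ?case
      unfolding isometry_onto_def
      using unit_extension_image[OF Suc.prems(1,2) e f T]
        unit_extension_isometric[OF Suc.prems(1) e f(2) _ T_iso] by blast
  qed
  then show ?thesis using assms by blast
qed

section \<open>Eigenspaces of a fundamental symmetry and existence of Lagrangians\<close>

definition pos_space :: "complex ^ 'n ^ 'n \<Rightarrow> (complex ^ 'n::finite) set" where
  "pos_space J = {v. J *v v = v}"

definition neg_space :: "complex ^ 'n ^ 'n \<Rightarrow> (complex ^ 'n::finite) set" where
  "neg_space J = {v. J *v v = - v}"

definition pos_part :: "complex ^ 'n ^ 'n \<Rightarrow> complex ^ 'n \<Rightarrow> complex ^ 'n::finite" where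
  "pos_part J x = (1/2) *s (x + J *v x)"

definition neg_part :: "complex ^ 'n ^ 'n \<Rightarrow> complex ^ 'n \<Rightarrow> complex ^ 'n::finite" where
  "neg_part J x = (1/2) *s (x - J *v x)"

lemma subspace_pos_space: "vec.subspace (pos_space J)"
  unfolding pos_space_def
  by (rule vec.subspaceI) (auto simp: matrix_vector_right_distrib vector_scalar_commute)

lemma subspace_neg_space: "vec.subspace (neg_space J)"
  unfolding neg_space_def
  by (rule vec.subspaceI) (auto simp: matrix_vector_right_distrib vector_scalar_commute)

lemma pos_part_in: "J ** J = mat 1 \<Longrightarrow> pos_part J x \<in> pos_space J"
  unfolding pos_space_def pos_part_def
  by (simp add: matrix_vector_right_distrib vector_scalar_commute involution_mult_vec add.commute)

lemma neg_part_in: "J ** J = mat 1 \<Longrightarrow> neg_part J x \<in> neg_space J"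
  unfolding neg_space_def neg_part_def
  by (simp add: matrix_vector_mult_diff_distrib vector_scalar_commute involution_mult_vec vec_eq_iff)

lemma pos_part_add_neg_part: "pos_part J x + neg_part J x = x"
  by (simp add: pos_part_def neg_part_def vec_eq_iff field_simps)

lemma pos_part_diff_neg_part: "pos_part J x - neg_part J x = J *v x"
  by (simp add: pos_part_def neg_part_def vec_eq_iff field_simps)

lemma parts_of_pos_add_neg:
  assumes "a \<in> pos_space J" "b \<in> neg_space J"
  shows "pos_part J (a + b) = a" "neg_part J (a + b) = b"
  using assms by (simp_all add: pos_part_def neg_part_def pos_space_def neg_space_def
      matrix_vector_right_distrib vec_eq_iff field_simps)

lemma ip_N_pos_neg_space:
  assumes "cadj J = J" "u \<in> pos_space J" "w \<in> neg_space J"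
  shows "ip_N u w = 0" "ip_N w u = 0"
proof -
  have "ip_N u w = ip_N (J *v u) w" using assms(2) by (simp add: pos_space_def)
  also have "\<dots> = ip_N u (J *v w)" by (rule ip_N_hermitian[OF assms(1)])
  also have "\<dots> = - ip_N u w" using assms(3) by (simp add: neg_space_def ip_N_neg_right)
  finally show "ip_N u w = 0" by simp
  then show "ip_N w u = 0" by (subst ip_N_commute) simp
qed

lemma ip_N_fund_sym:
  assumes "cadj J = J" "J ** J = mat 1"
  shows "ip_N x (J *v y) = ip_N (pos_part J x) (pos_part J y) - ip_N (neg_part J x) (neg_part J y)"
proof -
  have "ip_N x (J *v y) = ip_N (pos_part J x + neg_part J x) (pos_part J y - neg_part J y)"
    by (simp add: pos_part_add_neg_part pos_part_diff_neg_part)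
  then show ?thesis
    using ip_N_pos_neg_space[OF assms(1) pos_part_in[OF assms(2)] neg_part_in[OF assms(2)]]
    by (simp add: ip_N_add_left ip_N_diff_right)
qed

lemma range_one_minus_eq_neg_space:
  assumes "J ** J = mat 1"
  shows "range (\<lambda>v. (mat 1 - J) *v v) = neg_space J"
proof
  show "range (\<lambda>v. (mat 1 - J) *v v) \<subseteq> neg_space J"
    using assms by (auto simp: neg_space_def matrix_vector_mult_diff_rdistrib
        matrix_vector_mult_diff_distrib involution_mult_vec)
  show "neg_space J \<subseteq> range (\<lambda>v. (mat 1 - J) *v v)"
  proof
    fix v assume "v \<in> neg_space J"
    then have "(mat 1 - J) *v ((1/2) *s v) = v"
      by (simp add: neg_space_def matrix_vector_mult_diff_rdistrib vector_scalar_commute vec_eq_iff)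
    then show "v \<in> range (\<lambda>v. (mat 1 - J) *v v)" by (metis rangeI)
  qed
qed

lemma dim_pos_space_add_neg_space:
  fixes J :: "complex ^ 'n::finite ^ 'n"
  assumes "J ** J = mat 1"
  shows "vec.dim (pos_space J) + vec.dim (neg_space J) = CARD('n)"
proof -
  have "pos_space J \<inter> neg_space J = {0}"
    using vec.subspace_0[OF subspace_pos_space] vec.subspace_0[OF subspace_neg_space]
    by (auto simp: pos_space_def neg_space_def vec_eq_iff)
  moreover have "x \<in> {x + y |x y. x \<in> pos_space J \<and> y \<in> neg_space J}" for x
    using pos_part_add_neg_part[of J x, symmetric] pos_part_in[OF assms] neg_part_in[OF assms] by blast
  then have "{x + y |x y. x \<in> pos_space J \<and> y \<in> neg_space J} = UNIV" by blast
  ultimately show ?thesis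
    using vec.dim_sums_Int[OF subspace_pos_space subspace_neg_space, of J J] by (simp add: card_cart_basis)
qed

text \<open>U combines isometries between the +1 and between the -1 eigenspaces of Jp and Jm.\<close>

lemma exists_fund_sym_intertwiner:
  fixes Jm Jp :: "complex ^ 'n::finite ^ 'n"
  assumes hm: "cadj Jm = Jm" "Jm ** Jm = mat 1" and hp: "cadj Jp = Jp" "Jp ** Jp = mat 1"
    and dim_neg: "vec.dim (neg_space Jp) = vec.dim (neg_space Jm)"
  shows "\<exists>U. surj U \<and> (\<forall>x y. ip_N (U x) (Jm *v U y) = ip_N x (Jp *v y))"
proof -
  have "vec.dim (pos_space Jp) = vec.dim (pos_space Jm)"
    using dim_pos_space_add_neg_space[OF hp(2)] dim_pos_space_add_neg_space[OF hm(2)] dim_neg by simp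
  then obtain Tp where Tp: "isometry_onto (pos_space Jp) (pos_space Jm) Tp"
    using isometry_between_equidim_subspaces[OF subspace_pos_space subspace_pos_space] by blast
  obtain Tm where Tm: "isometry_onto (neg_space Jp) (neg_space Jm) Tm"
    using isometry_between_equidim_subspaces[OF subspace_neg_space subspace_neg_space dim_neg] by blast
  define U where "U x = Tp (pos_part Jp x) + Tm (neg_part Jp x)" for x
  have Tp_in: "Tp (pos_part Jp x) \<in> pos_space Jm" and Tm_in: "Tm (neg_part Jp x) \<in> neg_space Jm" for x
    using Tp Tm pos_part_in[OF hp(2)] neg_part_in[OF hp(2)] unfolding isometry_onto_def by blast+
  have "ip_N (U x) (Jm *v U y) = ip_N x (Jp *v y)" for x y
    unfolding ip_N_fund_sym[OF hm] ip_N_fund_sym[OF hp] U_def parts_of_pos_add_neg[OF Tp_in Tm_in]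
    using Tp Tm pos_part_in[OF hp(2)] neg_part_in[OF hp(2)] unfolding isometry_onto_def by simp
  moreover have "v \<in> range U" for v
  proof -
    have "pos_part Jm v \<in> Tp ` pos_space Jp" "neg_part Jm v \<in> Tm ` neg_space Jp"
      using Tp Tm pos_part_in[OF hm(2)] neg_part_in[OF hm(2)] unfolding isometry_onto_def by auto
    then obtain a1 a2 where a: "a1 \<in> pos_space Jp" "pos_part Jm v = Tp a1"
      "a2 \<in> neg_space Jp" "neg_part Jm v = Tm a2" by (elim imageE)
    then have "U (a1 + a2) = v"
      by (simp add: U_def parts_of_pos_add_neg flip: a(2,4) add: pos_part_add_neg_part)
    then show ?thesis by (metis rangeI)
  qed
  then have "surj U" by blast
  ultimately show ?thesis by blast
qed

lemma lagrangian_graph: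
  fixes Jm Jp :: "complex ^ 'n::finite ^ 'n"
  assumes Jm: "Jm ** Jm = mat 1" and U: "surj U" "\<And>x y. ip_N (U x) (Jm *v U y) = ip_N x (Jp *v y)"
  shows "lagrangian Jm Jp (range (\<lambda>a. (U a, a)))"
  unfolding lagrangian_def
proof (intro allI)
  fix w0 w :: "complex ^ 'n"
  have "w0 = U w \<longleftrightarrow> (\<forall>a. ip_N a (Jp *v w) = ip_N (U a) (Jm *v w0))"
  proof
    assume orth: "\<forall>a. ip_N a (Jp *v w) = ip_N (U a) (Jm *v w0)"
    have "ip_N (U a) (Jm *v (w0 - U w)) = 0" for a
      using orth U(2)[of a w] by (simp add: matrix_vector_mult_diff_distrib ip_N_diff_right)
    moreover obtain a where "U a = Jm *v (w0 - U w)"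
      using U(1) by (metis surjD)
    ultimately have "ip_N (Jm *v (w0 - U w)) (Jm *v (w0 - U w)) = 0"
      by metis
    then have "w0 - U w = 0"
      using involution_mult_vec[OF Jm, of "w0 - U w"] by (simp add: ip_N_self_eq_0_iff)
    then show "w0 = U w" by simp
  qed (simp add: U(2))
  then show "(w0, w) \<in> range (\<lambda>a. (U a, a)) \<longleftrightarrow> (\<forall>(b, a)\<in>range (\<lambda>a. (U a, a)). ip_N a (Jp *v w) = ip_N b (Jm *v w0))"
    by auto
qed

section \<open>Dimension of a Lagrangian relation\<close>

interpretation N2: finite_dimensional_vector_space_prod
  "(*s) :: complex \<Rightarrow> complex ^ 'n::finite \<Rightarrow> _" "(*s) :: complex \<Rightarrow> complex ^ 'n::finite \<Rightarrow> _"
  cart_basis cart_basis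
  by unfold_locales

lemma card_N2_Basis_pair [simp]:
  "card (N2.Basis_pair :: ((complex ^ 'n::finite) \<times> (complex ^ 'n)) set) = 2 * CARD('n)"
  by (simp add: N2.dimension_pair[unfolded N2.p.dimension_def vec.dimension_def] card_cart_basis)

lemma N2_dim_UNIV: "N2.p.dim (UNIV :: ((complex ^ 'n::finite) \<times> (complex ^ 'n)) set) = 2 * CARD('n)"
  by (simp add: N2.p.dim_UNIV N2.p.dimension_def)

lemma N2_dim_le: "N2.p.dim (A :: ((complex ^ 'n::finite) \<times> (complex ^ 'n)) set) \<le> 2 * CARD('n)"
  using N2.p.dim_subset_UNIV[of A] unfolding N2.p.dimension_def by simp

lemma N2_dim_add_le:
  fixes A B :: "((complex ^ 'n::finite) \<times> (complex ^ 'n)) set"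
  assumes "N2.p.subspace A" "N2.p.subspace B" "A \<inter> B \<subseteq> {0}"
  shows "N2.p.dim A + N2.p.dim B \<le> 2 * CARD('n)"
proof -
  have "N2.p.dim {x + y |x y. x \<in> A \<and> y \<in> B} + N2.p.dim (A \<inter> B) = N2.p.dim A + N2.p.dim B"
    by (rule N2.p.dim_sums_Int[OF assms(1,2)])
  moreover have "N2.p.dim (A \<inter> B) = 0" using assms(3) by simp
  ultimately show ?thesis using N2_dim_le[of "{x + y |x y. x \<in> A \<and> y \<in> B}"] by linarith
qed

definition ip_N2 :: "((complex ^ 'n::finite) \<times> (complex ^ 'n)) \<Rightarrow> ((complex ^ 'n) \<times> (complex ^ 'n)) \<Rightarrow> complex" where
  "ip_N2 v w = ip_N (fst v) (fst w) + ip_N (snd v) (snd w)"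

lemma ip_N2_add_left: "ip_N2 (v + w) m = ip_N2 v m + ip_N2 w m"
  by (simp add: ip_N2_def ip_N_add_left)

lemma ip_N2_scale_left: "ip_N2 (N2.scale c v) m = c * ip_N2 v m"
  by (cases v) (simp add: ip_N2_def N2.scale_prod ip_N_scale_left algebra_simps)

lemma ip_N2_add_right: "ip_N2 m (v + w) = ip_N2 m v + ip_N2 m w"
  by (simp add: ip_N2_def ip_N_add_right)

lemma ip_N2_scale_right: "ip_N2 m (N2.scale c v) = cnj c * ip_N2 m v"
  by (cases v) (simp add: ip_N2_def N2.scale_prod ip_N_scale_right algebra_simps)

lemma ip_N2_zero [simp]: "ip_N2 0 m = 0" "ip_N2 m 0 = 0"
  by (simp_all add: ip_N2_def)

lemma ip_N2_neg_right: "ip_N2 m (- v) = - ip_N2 m v"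
  by (simp add: ip_N2_def ip_N_neg_right)

lemma ip_N2_self_eq_0_iff: "ip_N2 v v = 0 \<longleftrightarrow> v = 0"
proof
  assume "ip_N2 v v = 0"
  then have "normsq_N (fst v) + normsq_N (snd v) = 0"
    by (simp add: ip_N2_def ip_N_self flip: of_real_add)
  then have "normsq_N (fst v) = 0" "normsq_N (snd v) = 0"
    using normsq_N_nonneg[of "fst v"] normsq_N_nonneg[of "snd v"] by linarith+
  then show "v = 0" by (simp add: normsq_N_eq_0_iff prod_eq_iff)
qed simp

lemma subspace_ip_N2_orth: "N2.p.subspace {v. \<forall>m\<in>X. ip_N2 v m = 0}"
  unfolding N2.p.subspace_def by (auto simp: ip_N2_add_left ip_N2_scale_left)

lemma dim_ip_N2_orth_single_ge: "2 * CARD('n) \<le> N2.p.dim {v :: (complex ^ 'n::finite) \<times> (complex ^ 'n). ip_N2 v m = 0} + 1"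
proof (cases "m = 0")
  case True
  then show ?thesis using N2_dim_UNIV by simp
next
  case False
  let ?H = "{v :: (complex ^ 'n) \<times> (complex ^ 'n). ip_N2 v m = 0}" and ?S = "N2.p.span {m}"
  have mm: "ip_N2 m m \<noteq> 0" using False ip_N2_self_eq_0_iff by blast
  have "v \<in> {x + y |x y. x \<in> ?H \<and> y \<in> ?S}" for v
  proof -
    define c where "c = ip_N2 v m / ip_N2 m m"
    have "ip_N2 (v + N2.scale (- c) m) m = 0"
      unfolding ip_N2_add_left ip_N2_scale_left using mm by (simp add: c_def)
    then have "v - N2.scale c m \<in> ?H" by (simp add: N2.p.scale_minus_left)
    moreover have "N2.scale c m \<in> ?S" by (simp add: N2.p.span_base N2.p.span_scale)
    moreover have "v = (v - N2.scale c m) + N2.scale c m" by simp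
    ultimately show ?thesis by blast
  qed
  then have "{x + y |x y. x \<in> ?H \<and> y \<in> ?S} = UNIV" by blast
  moreover have "N2.p.dim {x + y |x y. x \<in> ?H \<and> y \<in> ?S} + N2.p.dim (?H \<inter> ?S) = N2.p.dim ?H + N2.p.dim ?S"
    using subspace_ip_N2_orth[of "{m}"] by (intro N2.p.dim_sums_Int) (simp_all add: N2.p.subspace_span)
  moreover have "N2.p.dim ?S \<le> 1" by (simp add: N2.p.dim_span)
  ultimately show ?thesis using N2_dim_UNIV by simp
qed

lemma dim_ip_N2_orth_ge:
  fixes X :: "((complex ^ 'n::finite) \<times> (complex ^ 'n)) set"
  assumes "finite X"
  shows "2 * CARD('n) \<le> N2.p.dim {v. \<forall>m\<in>X. ip_N2 v m = 0} + card X"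
  using assms
proof (induction X rule: finite_induct)
  case (insert x X)
  let ?W = "{v. \<forall>m\<in>X. ip_N2 v m = 0}" and ?H = "{v. ip_N2 v x = 0}"
  have "{v. \<forall>m\<in>insert x X. ip_N2 v m = 0} = ?W \<inter> ?H" by auto
  moreover have "N2.p.dim {x + y |x y. x \<in> ?W \<and> y \<in> ?H} + N2.p.dim (?W \<inter> ?H) = N2.p.dim ?W + N2.p.dim ?H"
    using subspace_ip_N2_orth[of X] subspace_ip_N2_orth[of "{x}"] by (intro N2.p.dim_sums_Int) simp_all
  ultimately show ?case
    using insert N2_dim_le[of "{x + y |x y. x \<in> ?W \<and> y \<in> ?H}"] dim_ip_N2_orth_single_ge[of x] by simp
qed simp

text \<open>With the boundary form written as ip_N2 v (bc_form_map Jm Jp l), a Lagrangian relation is the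
  annihilator of its own image under bc_form_map.\<close>

definition bc_form_map :: "complex ^ 'n ^ 'n \<Rightarrow> complex ^ 'n ^ 'n \<Rightarrow> (complex ^ 'n::finite) \<times> (complex ^ 'n) \<Rightarrow> (complex ^ 'n) \<times> (complex ^ 'n)" where
  "bc_form_map Jm Jp v = (- (Jm *v fst v), Jp *v snd v)"

lemma bc_form_map_add: "bc_form_map Jm Jp (v + w) = bc_form_map Jm Jp v + bc_form_map Jm Jp w"
  by (simp add: bc_form_map_def matrix_vector_right_distrib)

lemma bc_form_map_scale: "bc_form_map Jm Jp (N2.scale c v) = N2.scale c (bc_form_map Jm Jp v)"
  by (simp add: bc_form_map_def N2.scale_def vector_scalar_commute)

lemma bc_form_map_zero [simp]: "bc_form_map Jm Jp 0 = 0"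
  by (simp add: bc_form_map_def zero_prod_def)

lemma lagrangian_iff_ip_N2:
  fixes Jm Jp :: "complex ^ 'n::finite ^ 'n"
  assumes "cadj Jm = Jm" "cadj Jp = Jp" "lagrangian Jm Jp L"
  shows "v \<in> L \<longleftrightarrow> (\<forall>l\<in>L. ip_N2 v (bc_form_map Jm Jp l) = 0)"
proof -
  have form: "ip_N2 (w0, w) (bc_form_map Jm Jp (b, a)) = cnj (ip_N a (Jp *v w) - ip_N b (Jm *v w0))"
    for w0 w b a :: "complex ^ 'n"
  proof -
    have "ip_N w (Jp *v a) = cnj (ip_N a (Jp *v w))"
      using ip_N_hermitian[OF assms(2), of w a] ip_N_commute[of "Jp *v w" a] by simp
    moreover have "ip_N w0 (Jm *v b) = cnj (ip_N b (Jm *v w0))"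
      using ip_N_hermitian[OF assms(1), of w0 b] ip_N_commute[of "Jm *v w0" b] by simp
    ultimately show ?thesis by (simp add: bc_form_map_def ip_N2_def ip_N_neg_right)
  qed
  obtain w0 w where v: "v = (w0, w)" by (cases v)
  show ?thesis
    using assms(3) unfolding lagrangian_def v by (auto simp: form)
qed

lemma lagrangian_subspace:
  assumes L: "lagrangian Jm Jp L"
  shows "N2.p.subspace L"
  unfolding N2.p.subspace_def
proof (intro conjI ballI allI)
  show "0 \<in> L" using lagrangian_zero[OF L] by (simp add: zero_prod_def)
  show "x + y \<in> L" if "x \<in> L" "y \<in> L" for x y
    using that lagrangian_add[OF L, of "fst x" "snd x" "fst y" "snd y"] by (simp add: plus_prod_def)
  show "N2.scale c x \<in> L" if "x \<in> L" for c x
    using that lagrangian_scale[OF L, of "fst x" "snd x" c] by (simp add: N2.scale_def)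
qed

lemma lagrangian_dim_ge:
  fixes Jm Jp :: "complex ^ 'n::finite ^ 'n"
  assumes "cadj Jm = Jm" "cadj Jp = Jp" and L: "lagrangian Jm Jp L"
  shows "CARD('n) \<le> N2.p.dim L"
proof -
  obtain B where B: "B \<subseteq> L" "N2.p.independent B" "L \<subseteq> N2.p.span B" "card B = N2.p.dim L"
    using N2.p.basis_exists by blast
  have fin: "finite B" using B(2) by (rule N2.p.finiteI_independent)
  have "{v. \<forall>m\<in>bc_form_map Jm Jp ` B. ip_N2 v m = 0} \<subseteq> L"
  proof
    fix v assume "v \<in> {v. \<forall>m\<in>bc_form_map Jm Jp ` B. ip_N2 v m = 0}"
    then have "B \<subseteq> {l. ip_N2 v (bc_form_map Jm Jp l) = 0}" by auto
    moreover have "N2.p.subspace {l. ip_N2 v (bc_form_map Jm Jp l) = 0}"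
      unfolding N2.p.subspace_def
      by (simp add: bc_form_map_add bc_form_map_scale ip_N2_add_right ip_N2_scale_right)
    ultimately have "\<forall>l\<in>L. ip_N2 v (bc_form_map Jm Jp l) = 0"
      using B(3) N2.p.span_minimal by blast
    then show "v \<in> L" using lagrangian_iff_ip_N2[OF assms] by blast
  qed
  then have "N2.p.dim {v. \<forall>m\<in>bc_form_map Jm Jp ` B. ip_N2 v m = 0} \<le> N2.p.dim L"
    by (rule N2.p.dim_subset)
  moreover have "card (bc_form_map Jm Jp ` B) \<le> card B" using fin by (rule card_image_le)
  ultimately show ?thesis
    using dim_ip_N2_orth_ge[of "bc_form_map Jm Jp ` B"] fin B(4) by simp
qed

text \<open>The boundary form is definite on both product subspaces.\<close>

lemma lagrangian_inter_definite:
  fixes Jm Jp :: "complex ^ 'n::finite ^ 'n"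
  assumes "cadj Jm = Jm" "cadj Jp = Jp" "lagrangian Jm Jp L"
  shows "L \<inter> (neg_space Jm \<times> pos_space Jp) \<subseteq> {0}" "L \<inter> (pos_space Jm \<times> neg_space Jp) \<subseteq> {0}"
proof -
  have self: "ip_N2 v (bc_form_map Jm Jp v) = 0" if "v \<in> L" for v
    using lagrangian_iff_ip_N2[OF assms] that by blast
  show "L \<inter> (neg_space Jm \<times> pos_space Jp) \<subseteq> {0}"
  proof
    fix v assume v: "v \<in> L \<inter> (neg_space Jm \<times> pos_space Jp)"
    then have "bc_form_map Jm Jp v = v"
      by (cases v) (simp add: bc_form_map_def neg_space_def pos_space_def)
    then have "ip_N2 v v = 0" using self v by force
    then show "v \<in> {0}" by (simp add: ip_N2_self_eq_0_iff)
  qed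
  show "L \<inter> (pos_space Jm \<times> neg_space Jp) \<subseteq> {0}"
  proof
    fix v assume v: "v \<in> L \<inter> (pos_space Jm \<times> neg_space Jp)"
    then have "bc_form_map Jm Jp v = - v"
      by (cases v) (simp add: bc_form_map_def neg_space_def pos_space_def)
    then have "ip_N2 v v = 0" using self[of v] v by (simp add: ip_N2_neg_right)
    then show "v \<in> {0}" by (simp add: ip_N2_self_eq_0_iff)
  qed
qed

text \<open>dim L \<ge> dim N by the count of constraints, while the definite subspaces give
  dim L + dim (neg_space Jm) + dim (pos_space Jp) \<le> 2 dim N and symmetrically.\<close>

lemma lagrangian_dim_neg_space:
  fixes Jm Jp :: "complex ^ 'n::finite ^ 'n"
  assumes hm: "cadj Jm = Jm" "Jm ** Jm = mat 1" and hp: "cadj Jp = Jp" "Jp ** Jp = mat 1"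
    and L: "lagrangian Jm Jp L"
  shows "vec.dim (neg_space Jp) = vec.dim (neg_space Jm)"
proof -
  have "N2.p.dim L + (vec.dim (neg_space Jm) + vec.dim (pos_space Jp)) \<le> 2 * CARD('n)"
    using N2_dim_add_le[OF lagrangian_subspace[OF L] N2.subspace_Times[OF subspace_neg_space subspace_pos_space]
        lagrangian_inter_definite(1)[OF hm(1) hp(1) L]]
    by (simp add: N2.dim_Times[OF subspace_neg_space subspace_pos_space])
  moreover have "N2.p.dim L + (vec.dim (pos_space Jm) + vec.dim (neg_space Jp)) \<le> 2 * CARD('n)"
    using N2_dim_add_le[OF lagrangian_subspace[OF L] N2.subspace_Times[OF subspace_pos_space subspace_neg_space]
        lagrangian_inter_definite(2)[OF hm(1) hp(1) L]]
    by (simp add: N2.dim_Times[OF subspace_pos_space subspace_neg_space])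
  ultimately show ?thesis
    using lagrangian_dim_ge[OF hm(1) hp(1) L]
      dim_pos_space_add_neg_space[OF hm(2)] dim_pos_space_add_neg_space[OF hp(2)] by linarith
qed

theorem proposition3p4:
  fixes Jm Jp :: "complex ^ 'n::finite ^ 'n"
  assumes "fund_sym_N Jm" and "fund_sym_N Jp"
    and "fund_sym_l2 (block_J Jm Jp)"
    and "commutes_with (block_J Jm Jp) op_S"
  shows "Sigma_J (block_J Jm Jp) op_S \<noteq> {} \<longleftrightarrow>
         vec.dim (range (\<lambda>v. (mat 1 - Jp) *v v)) = vec.dim (range (\<lambda>v. (mat 1 - Jm) *v v))"
proof -
  have hm: "cadj Jm = Jm" "Jm ** Jm = mat 1" using assms(1) by (auto simp: fund_sym_N_def)
  have hp: "cadj Jp = Jp" "Jp ** Jp = mat 1" using assms(2) by (auto simp: fund_sym_N_def)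
  have J_l2: "\<forall>f\<in>l2. block_J Jm Jp f \<in> l2" using assms(3) by (simp add: fund_sym_l2_def)
  have "Sigma_J (block_J Jm Jp) op_S \<noteq> {} \<longleftrightarrow> (\<exists>L. lagrangian Jm Jp L)"
    using Sigma_J_boundary_rel_lagrangian[OF hm(2) hp(2) J_l2] bc_op_in_Sigma_J[OF hm(2) hp(2) J_l2]
    by blast
  also have "\<dots> \<longleftrightarrow> vec.dim (neg_space Jp) = vec.dim (neg_space Jm)"
  proof
    assume "vec.dim (neg_space Jp) = vec.dim (neg_space Jm)"
    then obtain U where "surj U" "\<And>x y. ip_N (U x) (Jm *v U y) = ip_N x (Jp *v y)"
      using exists_fund_sym_intertwiner[OF hm hp] by blast
    then show "\<exists>L. lagrangian Jm Jp L" using lagrangian_graph[OF hm(2)] by blast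
  qed (use lagrangian_dim_neg_space[OF hm hp] in blast)
  finally show ?thesis
    by (simp add: range_one_minus_eq_neg_space hm(2) hp(2))
qed

end
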